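(* Let $\mathcal{P}=(\{\mathcal{E}_k:k\in K\},\{M_0,M_1\})$ be a concurrent quantum program on a Hilbert space $\mathcal{H}$ of finite dimension $d$, with initial density operator $\rho_0$. Then $\mathcal{P}$ with input $\rho_0$ terminates in the fair schedule $F$ if and only if it terminates in the schedule $\Pi^\omega$.
   Context: $\mathcal{H}$ is a complex Hilbert space of finite dimension $d\ge1$. A super-operator is a completely positive trace-non-increasing linear map on operators on $\mathcal{H}$. A concurrent quantum program is $\mathcal{P}=(\{\mathcal{E}_k:k\in K\},\{M_0,M_1\})$ with $K=\{1,\dots,m\}$, each $\mathcal{E}_k$ a trace-preserving super-operator, and $M_0^\dagger M_0+M_1^\dagger M_1=I$. $\mathcal{F}_k(\rho)=\mathcal{E}_k(M_1\rho M_1^\dagger)$; for a finite string $f=s_1\cdots s_n$ over $K$, $\mathcal{F}_f=\mathcal{F}_{s_n}\circ\cdots\circ\mathcal{F}_{s_1}$. $S=K^\omega$; for $s\in S$, $s[n]$ is its prefix of length $n$. $\mathcal{P}$ with input $\rho_0$ terminates for $s$ if $\mathcal{F}_{s[n]}(\rho_0)=0$ for some $n\ge1$, and terminates in a schedule $A\subseteq S$ if it terminates for every $s\in A$. An infinite path $s$ is fair if every $k\in K$ occurs infinitely often in $s$; $F$ is the set of fair paths. $P_K$ is the set of permutations of $K$, viewed as strings $s_1s_2\cdots s_m$ in which each element of $K$ occurs exactly once. $\Pi=\{s_1\sigma_1s_2\sigma_2\cdots\sigma_{m-1}s_m:\ s_1\cdots s_m\in P_K,\ \sigma_i\in K^*,\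 |\sigma_i|<d\text{ for }1\le i<m\}$, and $\Pi^\omega$ is the set of infinite paths that are concatenations of infinitely many strings from $\Pi$. *)

theory Defs
  imports "Jordan_Normal_Form.Matrix"
begin

definition adj :: "complex mat \<Rightarrow> complex mat" where
  "adj A = mat (dim_col A) (dim_row A) (\<lambda>(i,j). cnj (A $$ (j,i)))"

definition positive_op :: "nat \<Rightarrow> complex mat \<Rightarrow> bool" where
  "positive_op n A \<longleftrightarrow> A \<in> carrier_mat n n \<and>
     (\<forall>v \<in> carrier_vec n.
        let z = (\<Sum>i<n. \<Sum>j<n. cnj (v $ i) * A $$ (i,j) * v $ j)
        in Im z = 0 \<and> Re z \<ge> 0)"

definition trace :: "complex mat \<Rightarrow> complex" where
  "trace A = (\<Sum>i<dim_row A. A $$ (i,i))"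

definition density_op :: "nat \<Rightarrow> complex mat \<Rightarrow> bool" where
  "density_op d \<rho> \<longleftrightarrow> positive_op d \<rho> \<and> trace \<rho> = 1"

definition linear_op_map :: "nat \<Rightarrow> (complex mat \<Rightarrow> complex mat) \<Rightarrow> bool" where
  "linear_op_map d E \<longleftrightarrow>
     (\<forall>A \<in> carrier_mat d d. E A \<in> carrier_mat d d) \<and>
     (\<forall>A \<in> carrier_mat d d. \<forall>B \<in> carrier_mat d d. E (A + B) = E A + E B) \<and>
     (\<forall>A \<in> carrier_mat d d. \<forall>c. E (c \<cdot>\<^sub>m A) = c \<cdot>\<^sub>m E A)"

(* (id_{C^n} \<otimes> E) acting on operators on C^n \<otimes> C^d = C^(n*d);
   basis vector |a> \<otimes> |k> is indexed by a*d+k *)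
definition ampliate :: "nat \<Rightarrow> nat \<Rightarrow> (complex mat \<Rightarrow> complex mat) \<Rightarrow> complex mat \<Rightarrow> complex mat" where
  "ampliate n d E X = mat (n*d) (n*d) (\<lambda>(i,j).
      E (mat d d (\<lambda>(k,l). X $$ ((i div d)*d + k, (j div d)*d + l))) $$ (i mod d, j mod d))"

definition completely_positive :: "nat \<Rightarrow> (complex mat \<Rightarrow> complex mat) \<Rightarrow> bool" where
  "completely_positive d E \<longleftrightarrow>
     (\<forall>n X. positive_op (n*d) X \<longrightarrow> positive_op (n*d) (ampliate n d E X))"

definition super_operator :: "nat \<Rightarrow> (complex mat \<Rightarrow> complex mat) \<Rightarrow> bool" where
  "super_operator d E \<longleftrightarrow> linear_op_map d E \<and> completely_positive d E \<and>
     (\<forall>\<rho>. positive_op d \<rho> \<longrightarrow> Re (trace (E \<rho>)) \<le> Re (trace \<rho>))"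

definition trace_preserving :: "nat \<Rightarrow> (complex mat \<Rightarrow> complex mat) \<Rightarrow> bool" where
  "trace_preserving d E \<longleftrightarrow> (\<forall>A \<in> carrier_mat d d. trace (E A) = trace A)"

definition Fk :: "(nat \<Rightarrow> complex mat \<Rightarrow> complex mat) \<Rightarrow> complex mat \<Rightarrow> nat \<Rightarrow> complex mat \<Rightarrow> complex mat" where
  "Fk E M1 k \<rho> = E k (M1 * \<rho> * adj M1)"

definition Fstr :: "(nat \<Rightarrow> complex mat \<Rightarrow> complex mat) \<Rightarrow> complex mat \<Rightarrow> nat list \<Rightarrow> complex mat \<Rightarrow> complex mat" where
  "Fstr E M1 f \<rho> = fold (Fk E M1) f \<rho>"

definition prefix :: "(nat \<Rightarrow> nat) \<Rightarrow> nat \<Rightarrow> nat list" where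
  "prefix s n = map s [0..<n]"

definition paths :: "nat \<Rightarrow> (nat \<Rightarrow> nat) set" where
  "paths m = {s. \<forall>i. s i \<in> {1..m}}"

definition terminates_for :: "nat \<Rightarrow> (nat \<Rightarrow> complex mat \<Rightarrow> complex mat) \<Rightarrow> complex mat \<Rightarrow> complex mat \<Rightarrow> (nat \<Rightarrow> nat) \<Rightarrow> bool" where
  "terminates_for d E M1 \<rho>0 s \<longleftrightarrow> (\<exists>n\<ge>1. Fstr E M1 (prefix s n) \<rho>0 = 0\<^sub>m d d)"

definition terminates_in :: "nat \<Rightarrow> (nat \<Rightarrow> complex mat \<Rightarrow> complex mat) \<Rightarrow> complex mat \<Rightarrow> complex mat \<Rightarrow> (nat \<Rightarrow> nat) set \<Rightarrow> bool" where
  "terminates_in d E M1 \<rho>0 A \<longleftrightarrow> (\<forall>s \<in> A. terminates_for d E M1 \<rho>0 s)"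

definition fair_paths :: "nat \<Rightarrow> (nat \<Rightarrow> nat) set" where
  "fair_paths m = {s \<in> paths m. \<forall>k \<in> {1..m}. infinite {i. s i = k}}"

definition perms :: "nat \<Rightarrow> nat list set" where
  "perms m = {p. distinct p \<and> set p = {1..m}}"

(* Pi = { s_1 sigma_1 s_2 sigma_2 ... sigma_(m-1) s_m } *)
definition Pi_set :: "nat \<Rightarrow> nat \<Rightarrow> nat list set" where
  "Pi_set m d = {w. \<exists>p \<in> perms m. \<exists>\<sigma> :: nat \<Rightarrow> nat list.
      (\<forall>i < m - 1. set (\<sigma> i) \<subseteq> {1..m} \<and> length (\<sigma> i) < d) \<and>
      w = concat (map (\<lambda>i. [p ! i] @ (if i < m - 1 then \<sigma> i else [])) [0..<m])}"

(* infinite paths that are concatenations of infinitely many strings from Pi *)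
definition Pi_omega :: "nat \<Rightarrow> nat \<Rightarrow> (nat \<Rightarrow> nat) set" where
  "Pi_omega m d = {s. \<exists>ws :: nat \<Rightarrow> nat list. \<exists>b :: nat \<Rightarrow> nat.
      (\<forall>i. ws i \<in> Pi_set m d) \<and> b 0 = 0 \<and>
      (\<forall>i. b (Suc i) = b i + length (ws i)) \<and>
      (\<forall>i j. j < length (ws i) \<longrightarrow> s (b i + j) = ws i ! j)}"

end

theory Submission
  imports Defs "Jordan_Normal_Form.VS_Connect"
begin

(* Pi^omega is contained in F (every block of Pi contains each process), so one direction is
   immediate.  For the other, suppose a fair path s never terminates from rho0.  We build a path
   of Pi^omega that never terminates either, block by block: given a state Y and a fair path
   along which Y never dies, we read the processes in the order in which they next occur on the
   path and replace each gap between two consecutive new processes by a word of length < d.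
   The gap shortening rests on a dimension argument: for a positive operator Y, every F_sigma Y
   is dominated (Y' <= c Y'') by R_{d-1}, the sum of F_tau Y over all words tau of length < d,
   because the supports of the increasing chain R_0 <= R_1 <= ... are subspaces of C^d and must
   stabilise within d steps.  Domination is preserved by every F_g, so if F_g F_sigma Y is
   nonzero, then so is F_g F_tau Y for some short tau; a pigeonhole argument over the finitely
   many short words makes tau independent of how far along the path we look. *)


section \<open>Positive operators\<close>

definition hform :: "nat \<Rightarrow> complex mat \<Rightarrow> complex vec \<Rightarrow> complex vec \<Rightarrow> complex" where
  "hform n A u w = (\<Sum>i<n. \<Sum>j<n. cnj (u $ i) * A $$ (i,j) * w $ j)"

definition nonneg :: "complex \<Rightarrow> bool" where
  "nonneg z \<longleftrightarrow> Im z = 0 \<and> Re z \<ge> 0"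

lemma positive_op_iff_hform:
  "positive_op n A \<longleftrightarrow> A \<in> carrier_mat n n \<and> (\<forall>v\<in>carrier_vec n. nonneg (hform n A v v))"
  unfolding positive_op_def hform_def nonneg_def Let_def by simp

lemma positive_op_carrier: "positive_op n A \<Longrightarrow> A \<in> carrier_mat n n"
  by (simp add: positive_op_def)

lemma positive_op_nonneg: "positive_op n A \<Longrightarrow> v \<in> carrier_vec n \<Longrightarrow> nonneg (hform n A v v)"
  by (simp add: positive_op_iff_hform)

lemma positive_opI:
  "A \<in> carrier_mat n n \<Longrightarrow> (\<And>v. v \<in> carrier_vec n \<Longrightarrow> nonneg (hform n A v v)) \<Longrightarrow> positive_op n A"
  by (simp add: positive_op_iff_hform)

lemma nonneg_real: "nonneg a \<Longrightarrow> a = complex_of_real (Re a)"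
  by (simp add: nonneg_def complex_eq_iff)

lemma hform_add_mat:
  assumes "A \<in> carrier_mat n n" "B \<in> carrier_mat n n"
  shows "hform n (A + B) u w = hform n A u w + hform n B u w"
proof -
  have "hform n (A + B) u w = (\<Sum>i<n. \<Sum>j<n. cnj (u $ i) * A $$ (i,j) * w $ j + cnj (u $ i) * B $$ (i,j) * w $ j)"
    unfolding hform_def using assms by (intro sum.cong refl) (simp add: distrib_left distrib_right)
  then show ?thesis unfolding hform_def by (simp add: sum.distrib)
qed

lemma hform_minus_mat:
  assumes "A \<in> carrier_mat n n" "B \<in> carrier_mat n n"
  shows "hform n (A - B) u w = hform n A u w - hform n B u w"
proof -
  have "hform n (A - B) u w = (\<Sum>i<n. \<Sum>j<n. cnj (u $ i) * A $$ (i,j) * w $ j - cnj (u $ i) * B $$ (i,j) * w $ j)"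
    unfolding hform_def using assms by (intro sum.cong refl) (simp add: right_diff_distrib left_diff_distrib)
  then show ?thesis unfolding hform_def by (simp add: sum_subtractf)
qed

lemma hform_smult_mat: "A \<in> carrier_mat n n \<Longrightarrow> hform n (c \<cdot>\<^sub>m A) u w = c * hform n A u w"
  unfolding hform_def by (auto simp: sum_distrib_left algebra_simps intro!: sum.cong)

lemma hform_zero_mat: "hform n (0\<^sub>m n n) u w = 0"
  unfolding hform_def by (auto intro!: sum.neutral)

lemma hform_add_left:
  assumes "u \<in> carrier_vec n" "w \<in> carrier_vec n"
  shows "hform n A (u + w) v = hform n A u v + hform n A w v"
proof -
  have "hform n A (u + w) v = (\<Sum>i<n. \<Sum>j<n. cnj (u $ i) * A $$ (i,j) * v $ j + cnj (w $ i) * A $$ (i,j) * v $ j)"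
    unfolding hform_def using assms by (intro sum.cong refl) (simp add: distrib_left distrib_right)
  then show ?thesis unfolding hform_def by (simp add: sum.distrib)
qed

lemma hform_add_right:
  assumes "u \<in> carrier_vec n" "w \<in> carrier_vec n"
  shows "hform n A v (u + w) = hform n A v u + hform n A v w"
proof -
  have "hform n A v (u + w) = (\<Sum>i<n. \<Sum>j<n. cnj (v $ i) * A $$ (i,j) * u $ j + cnj (v $ i) * A $$ (i,j) * w $ j)"
    unfolding hform_def using assms by (intro sum.cong refl) (simp add: distrib_left distrib_right)
  then show ?thesis unfolding hform_def by (simp add: sum.distrib)
qed

lemma hform_smult_left: "u \<in> carrier_vec n \<Longrightarrow> hform n A (c \<cdot>\<^sub>v u) v = cnj c * hform n A u v"
  unfolding hform_def by (auto simp: sum_distrib_left algebra_simps intro!: sum.cong)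

lemma hform_smult_right: "u \<in> carrier_vec n \<Longrightarrow> hform n A v (c \<cdot>\<^sub>v u) = c * hform n A v u"
  unfolding hform_def by (auto simp: sum_distrib_left algebra_simps intro!: sum.cong)

lemma hform_expand:
  assumes "u \<in> carrier_vec n" "w \<in> carrier_vec n"
  shows "hform n A (u + z \<cdot>\<^sub>v w) (u + z \<cdot>\<^sub>v w)
           = hform n A u u + z * hform n A u w + cnj z * hform n A w u + cnj z * z * hform n A w w"
  using assms by (simp add: hform_add_left hform_add_right hform_smult_left hform_smult_right algebra_simps)

lemma hform_unit_right:
  assumes "i < n"
  shows "hform n A y (unit_vec n i) = (\<Sum>k<n. cnj (y $ k) * A $$ (k,i))"
  unfolding hform_def
proof (rule sum.cong[OF refl])
  fix k
  have "(\<Sum>l<n. cnj (y $ k) * A $$ (k, l) * unit_vec n i $ l)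
          = (\<Sum>l<n. if l = i then cnj (y $ k) * A $$ (k, l) else 0)"
    by (intro sum.cong) (auto simp: unit_vec_def)
  then show "(\<Sum>l<n. cnj (y $ k) * A $$ (k, l) * unit_vec n i $ l) = cnj (y $ k) * A $$ (k, i)"
    using assms by simp
qed

lemma hform_unit: "i < n \<Longrightarrow> j < n \<Longrightarrow> hform n A (unit_vec n i) (unit_vec n j) = A $$ (i,j)"
proof -
  assume ij: "i < n" "j < n"
  have "hform n A (unit_vec n i) (unit_vec n j) = (\<Sum>k<n. if k = i then A $$ (k,j) else 0)"
    unfolding hform_unit_right[OF ij(2)] by (intro sum.cong) (auto simp: unit_vec_def)
  then show ?thesis using ij by simp
qed

lemma positive_op_hermitian:
  assumes "positive_op n A" "u \<in> carrier_vec n" "w \<in> carrier_vec n"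
  shows "hform n A w u = cnj (hform n A u w)"
proof -
  have P: "\<And>v. v \<in> carrier_vec n \<Longrightarrow> nonneg (hform n A v v)"
    using assms(1) positive_op_nonneg by blast
  have "nonneg (hform n A (u + 1 \<cdot>\<^sub>v w) (u + 1 \<cdot>\<^sub>v w))"
       "nonneg (hform n A (u + \<i> \<cdot>\<^sub>v w) (u + \<i> \<cdot>\<^sub>v w))"
       "nonneg (hform n A u u)" "nonneg (hform n A w w)"
    using assms by (auto intro!: P)
  then show ?thesis unfolding hform_expand[OF assms(2,3)]
    by (simp add: nonneg_def complex_eq_iff algebra_simps)
qed

lemma positive_op_cauchy_schwarz:
  assumes A: "positive_op n A" and u: "u \<in> carrier_vec n" and w: "w \<in> carrier_vec n"
  shows "(cmod (hform n A u w))^2 \<le> Re (hform n A u u) * Re (hform n A w w)"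
proof -
  define a p q where "a = hform n A u w" and "p = Re (hform n A u u)" and "q = Re (hform n A w w)"
  have P: "\<And>v. v \<in> carrier_vec n \<Longrightarrow> nonneg (hform n A v v)" using A positive_op_nonneg by blast
  have pu: "hform n A u u = of_real p" and qw: "hform n A w w = of_real q"
    using P[OF u] P[OF w] nonneg_real p_def q_def by auto
  have pq: "p \<ge> 0" "q \<ge> 0" using P u w by (auto simp: nonneg_def p_def q_def)
  have wu: "hform n A w u = cnj a" using positive_op_hermitian[OF A u w] a_def by simp
  text \<open>The form at \<open>u - t a^* w\<close> is a nonnegative quadratic polynomial in \<open>t\<close>.\<close>
  have quadratic: "0 \<le> p - 2*t*(cmod a)^2 + t^2*(cmod a)^2*q" for t :: real
  proof -
    define z where "z = - (of_real t * cnj a)"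
    have "hform n A (u + z \<cdot>\<^sub>v w) (u + z \<cdot>\<^sub>v w) = of_real (p - 2*t*(cmod a)^2 + t^2*(cmod a)^2*q)"
      unfolding hform_expand[OF u w] pu qw wu a_def[symmetric] z_def cmod_power2
      by (simp add: complex_eq_iff algebra_simps power2_eq_square)
    moreover have "nonneg (hform n A (u + z \<cdot>\<^sub>v w) (u + z \<cdot>\<^sub>v w))" using u w by (intro P) auto
    ultimately show ?thesis by (simp add: nonneg_def)
  qed
  show ?thesis
  proof (cases "cmod a = 0")
    case True then show ?thesis using pq by (simp add: a_def p_def q_def)
  next
    case False
    then have a2: "(cmod a)^2 > 0" by simp
    show ?thesis
    proof (cases "q = 0")
      case True
      from quadratic[of "(p+1)/(2*(cmod a)^2)"] True a2 show ?thesis by (simp add: field_simps)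
    next
      case False
      with pq have q: "q > 0" by simp
      from quadratic[of "1/q"] q have "0 \<le> p - (cmod a)^2/q" by (simp add: field_simps power2_eq_square)
      then have "(cmod a)^2 \<le> p * q" using q by (simp add: field_simps)
      then show ?thesis by (simp add: a_def p_def q_def)
    qed
  qed
qed

lemma positive_op_entry_bound:
  assumes "positive_op n A" "i < n" "j < n"
  shows "(cmod (A $$ (i,j)))^2 \<le> Re (A $$ (i,i)) * Re (A $$ (j,j))"
  using positive_op_cauchy_schwarz[OF assms(1), of "unit_vec n i" "unit_vec n j"] assms(2,3)
  by (simp add: hform_unit)

lemma positive_op_diag_zero:
  assumes A: "positive_op n A" and z: "\<And>i. i < n \<Longrightarrow> A $$ (i,i) = 0"
  shows "A = 0\<^sub>m n n"
proof (rule eq_matI)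
  show "dim_row A = dim_row (0\<^sub>m n n)" "dim_col A = dim_col (0\<^sub>m n n)"
    using positive_op_carrier[OF A] by auto
  fix i j assume "i < dim_row (0\<^sub>m n n)" "j < dim_col (0\<^sub>m n n)"
  then have ij: "i < n" "j < n" by auto
  have "(cmod (A $$ (i,j)))^2 \<le> 0" using positive_op_entry_bound[OF A ij] z ij by simp
  then show "A $$ (i,j) = 0\<^sub>m n n $$ (i,j)" using ij by simp
qed

lemma positive_op_zero: "positive_op n (0\<^sub>m n n)"
  by (intro positive_opI) (auto simp: hform_zero_mat nonneg_def)

lemma positive_op_add: "positive_op n A \<Longrightarrow> positive_op n B \<Longrightarrow> positive_op n (A + B)"
  by (intro positive_opI)
     (auto simp: hform_add_mat positive_op_carrier positive_op_nonneg nonneg_def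
           dest!: positive_op_nonneg[of n A] positive_op_nonneg[of n B])


section \<open>Quadratic forms and domination\<close>

definition qform :: "nat \<Rightarrow> complex mat \<Rightarrow> complex vec \<Rightarrow> real" where
  "qform n A v = Re (hform n A v v)"

lemma positive_op_hform_real: "positive_op n A \<Longrightarrow> v \<in> carrier_vec n \<Longrightarrow> hform n A v v = of_real (qform n A v)"
  using positive_op_nonneg nonneg_real qform_def by metis

lemma positive_op_qform_nonneg: "positive_op n A \<Longrightarrow> v \<in> carrier_vec n \<Longrightarrow> qform n A v \<ge> 0"
  using positive_op_nonneg nonneg_def qform_def by metis

lemma qform_add: "A \<in> carrier_mat n n \<Longrightarrow> B \<in> carrier_mat n n \<Longrightarrow> qform n (A + B) v = qform n A v + qform n B v"
  by (simp add: qform_def hform_add_mat)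

lemma qform_minus: "A \<in> carrier_mat n n \<Longrightarrow> B \<in> carrier_mat n n \<Longrightarrow> qform n (A - B) v = qform n A v - qform n B v"
  by (simp add: qform_def hform_minus_mat)

lemma qform_zero: "qform n (0\<^sub>m n n) v = 0"
  by (simp add: qform_def hform_zero_mat)

lemma positive_op_by_qform:
  assumes "A \<in> carrier_mat n n" "\<And>v. v \<in> carrier_vec n \<Longrightarrow> hform n A v v = of_real (qform n A v)"
    "\<And>v. v \<in> carrier_vec n \<Longrightarrow> qform n A v \<ge> 0"
  shows "positive_op n A"
  using assms by (auto simp: positive_op_iff_hform nonneg_def)

lemma positive_op_scaled_diff_iff:
  assumes A: "positive_op n A" and B: "positive_op n B"
  shows "positive_op n (complex_of_real c \<cdot>\<^sub>m B - A) \<longleftrightarrow> (\<forall>v\<in>carrier_vec n. qform n A v \<le> c * qform n B v)"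
proof -
  have cA: "A \<in> carrier_mat n n" and cB: "B \<in> carrier_mat n n" using A B positive_op_carrier by auto
  have e: "hform n (complex_of_real c \<cdot>\<^sub>m B - A) v v = of_real (c * qform n B v - qform n A v)"
    if v: "v \<in> carrier_vec n" for v
    using hform_minus_mat[of "complex_of_real c \<cdot>\<^sub>m B" n A] cA cB hform_smult_mat[OF cB]
      positive_op_hform_real[OF A v] positive_op_hform_real[OF B v] by simp
  then show ?thesis using cA cB by (auto simp: positive_op_iff_hform nonneg_def)
qed

definition dominated :: "nat \<Rightarrow> complex mat \<Rightarrow> complex mat \<Rightarrow> bool" where
  "dominated n A B \<longleftrightarrow> (\<exists>c\<ge>0. positive_op n (complex_of_real c \<cdot>\<^sub>m B - A))"

lemma dominated_iff:
  assumes "positive_op n A" "positive_op n B"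
  shows "dominated n A B \<longleftrightarrow> (\<exists>c\<ge>0. \<forall>v\<in>carrier_vec n. qform n A v \<le> c * qform n B v)"
  unfolding dominated_def positive_op_scaled_diff_iff[OF assms] ..

lemma dominated_by_qform:
  assumes "positive_op n A" "positive_op n B" "c \<ge> 0"
    and "\<And>v. v \<in> carrier_vec n \<Longrightarrow> qform n A v \<le> c * qform n B v"
  shows "dominated n A B"
  using dominated_iff[OF assms(1,2)] assms(3,4) by auto

lemma dominated_qformE:
  assumes "positive_op n A" "positive_op n B" "dominated n A B"
  obtains c where "c \<ge> 0" "\<And>v. v \<in> carrier_vec n \<Longrightarrow> qform n A v \<le> c * qform n B v"
  using dominated_iff[OF assms(1,2)] assms(3) by auto

lemma dominated_refl: "positive_op n A \<Longrightarrow> dominated n A A"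
  by (rule dominated_by_qform[of _ _ _ 1]) auto

lemma dominated_trans:
  assumes A: "positive_op n A" and B: "positive_op n B" and C: "positive_op n C"
    and "dominated n A B" "dominated n B C"
  shows "dominated n A C"
proof -
  obtain c1 where c1: "c1 \<ge> 0" "\<And>v. v \<in> carrier_vec n \<Longrightarrow> qform n A v \<le> c1 * qform n B v"
    using dominated_qformE[OF A B assms(4)] by blast
  obtain c2 where c2: "c2 \<ge> 0" "\<And>v. v \<in> carrier_vec n \<Longrightarrow> qform n B v \<le> c2 * qform n C v"
    using dominated_qformE[OF B C assms(5)] by blast
  show ?thesis
  proof (rule dominated_by_qform[OF A C, of "c1 * c2"])
    fix v :: "complex vec" assume v: "v \<in> carrier_vec n"
    have "qform n A v \<le> c1 * qform n B v" using c1 v by auto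
    also have "\<dots> \<le> c1 * (c2 * qform n C v)" using c2 v c1(1) by (auto intro: mult_left_mono)
    finally show "qform n A v \<le> (c1 * c2) * qform n C v" by simp
  qed (use c1 c2 in simp)
qed

lemma dominated_add:
  assumes A: "positive_op n A" and A': "positive_op n A'" and B: "positive_op n B" and B': "positive_op n B'"
    and "dominated n A B" "dominated n A' B'"
  shows "dominated n (A + A') (B + B')"
proof -
  obtain c1 where c1: "c1 \<ge> 0" "\<And>v. v \<in> carrier_vec n \<Longrightarrow> qform n A v \<le> c1 * qform n B v"
    using dominated_qformE[OF A B assms(5)] by blast
  obtain c2 where c2: "c2 \<ge> 0" "\<And>v. v \<in> carrier_vec n \<Longrightarrow> qform n A' v \<le> c2 * qform n B' v"
    using dominated_qformE[OF A' B' assms(6)] by blast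
  show ?thesis
  proof (rule dominated_by_qform[OF positive_op_add[OF A A'] positive_op_add[OF B B'], of "c1 + c2"])
    fix v :: "complex vec" assume v: "v \<in> carrier_vec n"
    have "qform n B v \<ge> 0" "qform n B' v \<ge> 0" using B B' v by (auto intro: positive_op_qform_nonneg)
    then have "c1 * qform n B v + c2 * qform n B' v \<le> (c1 + c2) * (qform n B v + qform n B' v)"
      using c1(1) c2(1) by (simp add: algebra_simps)
    then show "qform n (A + A') v \<le> (c1 + c2) * qform n (B + B') v"
      using c1(2)[OF v] c2(2)[OF v] A A' B B'
      by (simp add: qform_add positive_op_carrier)
  qed (use c1 c2 in simp)
qed

lemma dominated_summand:
  assumes A: "positive_op n A" and B: "positive_op n B"
  shows "dominated n A (A + B)" "dominated n B (A + B)"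
  using A B positive_op_qform_nonneg[OF A] positive_op_qform_nonneg[OF B]
  by (auto intro!: dominated_by_qform[of _ _ _ 1] positive_op_add simp: qform_add positive_op_carrier)

lemma dominated_zero:
  assumes A: "positive_op n A" and "dominated n A (0\<^sub>m n n)"
  shows "A = 0\<^sub>m n n"
proof (rule positive_op_diag_zero[OF A])
  fix i assume i: "i < n"
  obtain c where "c \<ge> 0" "\<And>v. v \<in> carrier_vec n \<Longrightarrow> qform n A v \<le> c * qform n (0\<^sub>m n n) v"
    using dominated_qformE[OF A positive_op_zero assms(2)] by blast
  then have "qform n A (unit_vec n i) \<le> 0" by (simp add: qform_zero)
  then have "qform n A (unit_vec n i) = 0" using positive_op_qform_nonneg[OF A, of "unit_vec n i"] by simp
  then show "A $$ (i,i) = 0" using positive_op_hform_real[OF A, of "unit_vec n i"] i by (simp add: hform_unit)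
qed


section \<open>Supports\<close>

definition outer :: "nat \<Rightarrow> complex vec \<Rightarrow> complex mat" where
  "outer n v = mat n n (\<lambda>(i,j). v $ i * cnj (v $ j))"

definition cinner :: "nat \<Rightarrow> complex vec \<Rightarrow> complex vec \<Rightarrow> complex" where
  "cinner n y v = (\<Sum>k<n. cnj (y $ k) * v $ k)"

lemma outer_carrier[simp]: "outer n v \<in> carrier_mat n n"
  by (simp add: outer_def)

lemma hform_outer: "hform n (outer n v) y y = of_real ((cmod (cinner n y v))^2)"
proof -
  have "hform n (outer n v) y y = (\<Sum>i<n. \<Sum>j<n. (cnj (y $ i) * v $ i) * (cnj (v $ j) * y $ j))"
    unfolding hform_def outer_def by (intro sum.cong refl) (simp add: algebra_simps)
  also have "\<dots> = cinner n y v * cnj (cinner n y v)"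
    unfolding cinner_def sum_product[symmetric] by (simp add: mult.commute)
  finally show ?thesis by (simp add: complex_norm_square[symmetric])
qed

lemma qform_outer: "qform n (outer n v) y = (cmod (cinner n y v))^2"
  by (simp add: qform_def hform_outer)

lemma positive_op_outer: "positive_op n (outer n v)"
  by (intro positive_opI) (auto simp: hform_outer nonneg_def)

lemma cinner_add: "u \<in> carrier_vec n \<Longrightarrow> w \<in> carrier_vec n \<Longrightarrow> cinner n y (u + w) = cinner n y u + cinner n y w"
  unfolding cinner_def by (simp add: distrib_left sum.distrib)

lemma cinner_smult: "u \<in> carrier_vec n \<Longrightarrow> cinner n y (c \<cdot>\<^sub>v u) = c * cinner n y u"
  unfolding cinner_def by (auto simp: sum_distrib_left algebra_simps intro!: sum.cong)

definition supp :: "nat \<Rightarrow> complex mat \<Rightarrow> complex vec set" where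
  "supp n X = {v \<in> carrier_vec n. dominated n (outer n v) X}"

lemma supp_mono:
  assumes "positive_op n X" "positive_op n Y" "dominated n X Y"
  shows "supp n X \<subseteq> supp n Y"
  unfolding supp_def using dominated_trans[OF positive_op_outer assms(1,2) _ assms(3)] by auto

lemma supp_zero: "positive_op n X \<Longrightarrow> 0\<^sub>v n \<in> supp n X"
  unfolding supp_def
  by (auto intro!: dominated_by_qform[OF positive_op_outer, of n X 0] simp: qform_outer cinner_def)

text \<open>Closure under addition uses \<open>|<y,v+w>|^2 \<le> 2 |<y,v>|^2 + 2 |<y,w>|^2\<close>.\<close>

lemma supp_add:
  assumes X: "positive_op n X" and v: "v \<in> supp n X" and w: "w \<in> supp n X"
  shows "v + w \<in> supp n X"
proof -
  have vc: "v \<in> carrier_vec n" and wc: "w \<in> carrier_vec n" using v w by (auto simp: supp_def)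
  obtain c1 where c1: "c1 \<ge> 0" "\<And>y. y \<in> carrier_vec n \<Longrightarrow> qform n (outer n v) y \<le> c1 * qform n X y"
    using dominated_qformE[OF positive_op_outer X] v by (auto simp: supp_def)
  obtain c2 where c2: "c2 \<ge> 0" "\<And>y. y \<in> carrier_vec n \<Longrightarrow> qform n (outer n w) y \<le> c2 * qform n X y"
    using dominated_qformE[OF positive_op_outer X] w by (auto simp: supp_def)
  have "dominated n (outer n (v + w)) X"
  proof (rule dominated_by_qform[OF positive_op_outer X, of "2*c1 + 2*c2"])
    fix y :: "complex vec" assume y: "y \<in> carrier_vec n"
    have "(cmod (cinner n y v + cinner n y w))^2 \<le> (cmod (cinner n y v) + cmod (cinner n y w))^2"
      by (intro power_mono norm_triangle_ineq) auto
    also have "\<dots> \<le> 2 * (cmod (cinner n y v))^2 + 2 * (cmod (cinner n y w))^2"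
      using sum_squares_ge_zero[of "cmod (cinner n y v) - cmod (cinner n y w)" 0]
      by (simp add: power2_eq_square algebra_simps)
    finally show "qform n (outer n (v + w)) y \<le> (2*c1 + 2*c2) * qform n X y"
      using c1(2)[OF y] c2(2)[OF y] by (simp add: qform_outer cinner_add[OF vc wc] algebra_simps)
  qed (use c1 c2 in simp)
  then show ?thesis using vc wc by (simp add: supp_def)
qed

lemma supp_smult:
  assumes X: "positive_op n X" and v: "v \<in> supp n X"
  shows "c \<cdot>\<^sub>v v \<in> supp n X"
proof -
  have vc: "v \<in> carrier_vec n" using v by (auto simp: supp_def)
  obtain c1 where c1: "c1 \<ge> 0" "\<And>y. y \<in> carrier_vec n \<Longrightarrow> qform n (outer n v) y \<le> c1 * qform n X y"
    using dominated_qformE[OF positive_op_outer X] v by (auto simp: supp_def)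
  have "dominated n (outer n (c \<cdot>\<^sub>v v)) X"
  proof (rule dominated_by_qform[OF positive_op_outer X, of "(cmod c)^2 * c1"])
    fix y :: "complex vec" assume y: "y \<in> carrier_vec n"
    have "qform n (outer n (c \<cdot>\<^sub>v v)) y = (cmod c)^2 * qform n (outer n v) y"
      by (simp add: qform_outer cinner_smult[OF vc] norm_mult power_mult_distrib)
    also have "\<dots> \<le> (cmod c)^2 * (c1 * qform n X y)" using c1(2)[OF y] by (intro mult_left_mono) auto
    finally show "qform n (outer n (c \<cdot>\<^sub>v v)) y \<le> ((cmod c)^2 * c1) * qform n X y" by simp
  qed (use c1 in simp)
  then show ?thesis using vc by (simp add: supp_def)
qed

lemma supp_submodule:
  assumes X: "positive_op n X"
  shows "submodule class_ring (supp n X) (module_vec TYPE(complex) n)"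
proof -
  interpret vec_space "TYPE(complex)" n .
  show ?thesis
    unfolding submodule_def using supp_add[OF X] supp_smult[OF X] supp_zero[OF X]
    by (auto simp: supp_def module_axioms[unfolded class_field_def] module_vec_simps class_ring_simps)
qed

text \<open>Peeling off a column: for a positive \<open>A\<close> with \<open>A_ii \<noteq> 0\<close>, the scaled column
  \<open>v = A e_i / sqrt A_ii\<close> gives a rank-one part \<open>|v><v| \<le> A\<close> whose removal keeps
  \<open>A - |v><v|\<close> positive and kills the \<open>i\<close>-th diagonal entry.\<close>

definition peel_vec :: "nat \<Rightarrow> complex mat \<Rightarrow> nat \<Rightarrow> complex vec" where
  "peel_vec n A i = vec n (\<lambda>k. A $$ (k,i) / complex_of_real (sqrt (Re (A $$ (i,i)))))"

lemma peel_vec_props: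
  assumes A: "positive_op n A" and i: "i < n" and nz: "A $$ (i,i) \<noteq> 0"
  defines "v \<equiv> peel_vec n A i"
  shows "v \<in> carrier_vec n" "v $ i \<noteq> 0"
    and "\<And>y. y \<in> carrier_vec n \<Longrightarrow> qform n (outer n v) y \<le> qform n A y"
    and "\<And>j. j < n \<Longrightarrow> (A - outer n v) $$ (j,j) = A $$ (j,j) - of_real ((cmod (A $$ (j,i)))^2 / Re (A $$ (i,i)))"
proof -
  define a where "a = Re (A $$ (i,i))"
  have Aii: "A $$ (i,i) = of_real a"
    using positive_op_hform_real[OF A, of "unit_vec n i"] i by (simp add: hform_unit a_def qform_def)
  have "a \<ge> 0" using positive_op_qform_nonneg[OF A, of "unit_vec n i"] i
    by (simp add: qform_def hform_unit a_def)
  moreover have "a \<noteq> 0" using nz Aii by auto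
  ultimately have a: "a > 0" by simp
  have v: "v = vec n (\<lambda>k. A $$ (k,i) / complex_of_real (sqrt a))" by (simp add: v_def peel_vec_def a_def)
  show "v \<in> carrier_vec n" by (simp add: v)
  show "v $ i \<noteq> 0" using i nz a by (simp add: v)
  show "qform n (outer n v) y \<le> qform n A y" if y: "y \<in> carrier_vec n" for y
  proof -
    have "cinner n y v = hform n A y (unit_vec n i) / complex_of_real (sqrt a)"
      unfolding cinner_def hform_unit_right[OF i] v by (simp add: sum_divide_distrib)
    then have "qform n (outer n v) y = (cmod (hform n A y (unit_vec n i)))^2 / a"
      unfolding qform_outer using a by (simp add: norm_divide power_divide)
    also have "\<dots> \<le> (qform n A y * a) / a"
      using positive_op_cauchy_schwarz[OF A y, of "unit_vec n i"] i a
      by (intro divide_right_mono) (auto simp: hform_unit qform_def a_def)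
    finally show ?thesis using a by simp
  qed
  show "(A - outer n v) $$ (j,j) = A $$ (j,j) - of_real ((cmod (A $$ (j,i)))^2 / Re (A $$ (i,i)))"
    if j: "j < n" for j
  proof -
    have ss: "complex_of_real (sqrt a) * complex_of_real (sqrt a) = complex_of_real a"
      using a by (simp flip: of_real_mult)
    have "v $ j * cnj (v $ j) = (A $$ (j,i) * cnj (A $$ (j,i))) / (complex_of_real (sqrt a) * complex_of_real (sqrt a))"
      using j by (simp add: v)
    then have "v $ j * cnj (v $ j) = complex_of_real ((cmod (A $$ (j,i)))^2 / a)"
      by (simp add: ss complex_norm_square[symmetric])
    moreover have "(A - outer n v) $$ (j,j) = A $$ (j,j) - v $ j * cnj (v $ j)"
      using j positive_op_carrier[OF A] by (simp add: outer_def)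
    ultimately show ?thesis by (simp add: a_def)
  qed
qed

definition diag_support :: "nat \<Rightarrow> complex mat \<Rightarrow> nat set" where
  "diag_support n A = {j. j < n \<and> A $$ (j,j) \<noteq> 0}"

text \<open>Removing the peeled rank-one part kills the \<open>i\<close>-th diagonal entry and creates no new
  nonzero diagonal entries (a zero diagonal entry of a positive operator has a zero row).\<close>

lemma peel_diag_support:
  assumes A: "positive_op n A" and i: "i \<in> diag_support n A"
  defines "v \<equiv> peel_vec n A i"
  shows "diag_support n (A - outer n v) \<subseteq> diag_support n A - {i}"
proof
  have i': "i < n" "A $$ (i,i) \<noteq> 0" using i by (auto simp: diag_support_def)
  note peel = peel_vec_props[OF A i']
  fix j assume "j \<in> diag_support n (A - outer n v)"
  then have j: "j < n" and nzj: "(A - outer n v) $$ (j,j) \<noteq> 0" by (auto simp: diag_support_def)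
  have Aii: "A $$ (i,i) = of_real (Re (A $$ (i,i)))"
    using positive_op_hform_real[OF A, of "unit_vec n i"] i' by (simp add: hform_unit qform_def)
  have "j \<noteq> i"
  proof
    assume ji: "j = i"
    obtain a where a: "A $$ (i,i) = of_real a" "a \<noteq> 0" using Aii i'(2) by (metis of_real_0)
    have "(A - outer n v) $$ (j,j) = 0" using peel(4)[OF j] ji a v_def by (simp add: power2_eq_square)
    then show False using nzj by simp
  qed
  moreover have "A $$ (j,j) \<noteq> 0"
  proof
    assume z: "A $$ (j,j) = 0"
    then have "A $$ (j,i) = 0" using positive_op_entry_bound[OF A j i'(1)] by simp
    then show False using nzj peel(4)[OF j] z v_def by simp
  qed
  ultimately show "j \<in> diag_support n A - {i}" using j by (auto simp: diag_support_def)
qed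

lemma rank_one_peel:
  assumes A: "positive_op n A" and i: "i \<in> diag_support n A"
  obtains v where "v \<in> supp n A" "v \<noteq> 0\<^sub>v n" "positive_op n (A - outer n v)"
    "\<And>y. y \<in> carrier_vec n \<Longrightarrow> qform n A y = qform n (A - outer n v) y + qform n (outer n v) y"
    "diag_support n (A - outer n v) \<subset> diag_support n A"
proof
  have i': "i < n" "A $$ (i,i) \<noteq> 0" using i by (auto simp: diag_support_def)
  note peel = peel_vec_props[OF A i']
  define v where "v = peel_vec n A i"
  have cA: "A \<in> carrier_mat n n" using A positive_op_carrier by auto
  show "qform n A y = qform n (A - outer n v) y + qform n (outer n v) y" for y
    using qform_minus[OF cA outer_carrier] by simp
  show "v \<in> supp n A" using peel(1,3) unfolding v_def supp_def
    by (auto intro!: dominated_by_qform[OF positive_op_outer A, of 1])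
  show "v \<noteq> 0\<^sub>v n" using peel(2) i' v_def by auto
  show "positive_op n (A - outer n v)"
  proof (rule positive_op_by_qform)
    fix y :: "complex vec" assume y: "y \<in> carrier_vec n"
    show "hform n (A - outer n v) y y = complex_of_real (qform n (A - outer n v) y)"
      using hform_minus_mat[OF cA outer_carrier] positive_op_hform_real[OF A y]
        positive_op_hform_real[OF positive_op_outer y] by (simp add: qform_def)
    show "qform n (A - outer n v) y \<ge> 0" using peel(3)[OF y] qform_minus[OF cA outer_carrier] v_def by simp
  qed (use cA in \<open>simp add: minus_carrier_mat\<close>)
  show "diag_support n (A - outer n v) \<subset> diag_support n A"
    using peel_diag_support[OF A i] i unfolding v_def by auto
qed

text \<open>Conversely, support inclusion implies domination: peel \<open>A\<close> into rank-one parts, each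
  lying in the support of \<open>B\<close>, by induction on the number of nonzero diagonal entries.\<close>

lemma supp_subset_imp_dominated:
  assumes "positive_op n A" "positive_op n B" "supp n A \<subseteq> supp n B"
  shows "dominated n A B"
  using assms
proof (induction "card (diag_support n A)" arbitrary: A rule: less_induct)
  case less
  note A = less.prems(1) and B = less.prems(2)
  show ?case
  proof (cases "diag_support n A = {}")
    case True
    then have "A = 0\<^sub>m n n" by (intro positive_op_diag_zero[OF A]) (auto simp: diag_support_def)
    then show ?thesis by (intro dominated_by_qform[OF A B order_refl]) (simp add: qform_zero)
  next
    case False
    then obtain i where "i \<in> diag_support n A" by blast
    then obtain v where v: "v \<in> supp n A" and A': "positive_op n (A - outer n v)"
      and split: "\<And>y. y \<in> carrier_vec n \<Longrightarrow> qform n A y = qform n (A - outer n v) y + qform n (outer n v) y"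
      and smaller: "diag_support n (A - outer n v) \<subset> diag_support n A"
      using rank_one_peel[OF A] by metis
    have "dominated n (A - outer n v) A"
      using split positive_op_qform_nonneg[OF positive_op_outer]
      by (intro dominated_by_qform[OF A' A, of 1]) fastforce+
    then have "supp n (A - outer n v) \<subseteq> supp n B" using supp_mono[OF A' A] less.prems(3) by blast
    moreover have "card (diag_support n (A - outer n v)) < card (diag_support n A)"
      using smaller by (intro psubset_card_mono) (auto simp: diag_support_def)
    ultimately have "dominated n (A - outer n v) B" using less.hyps A' B by blast
    then obtain c1 where c1: "c1 \<ge> 0" "\<And>y. y \<in> carrier_vec n \<Longrightarrow> qform n (A - outer n v) y \<le> c1 * qform n B y"
      using dominated_qformE[OF A' B] by blast
    obtain c2 where c2: "c2 \<ge> 0" "\<And>y. y \<in> carrier_vec n \<Longrightarrow> qform n (outer n v) y \<le> c2 * qform n B y"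
      using dominated_qformE[OF positive_op_outer B] v less.prems(3) by (auto simp: supp_def)
    show ?thesis
      using c1 c2 split by (intro dominated_by_qform[OF A B, of "c1 + c2"]) (auto simp: distrib_right intro: add_mono)
  qed
qed

text \<open>A strictly increasing chain \<open>V_0 \<subset> ... \<subset> V_n\<close> of subspaces of \<open>C^n\<close> with
  \<open>V_0 \<noteq> 0\<close> is impossible: it would contain \<open>n + 1\<close> independent vectors.\<close>

lemma subspace_chain_bound:
  fixes V :: "nat \<Rightarrow> complex vec set"
  assumes sub: "\<And>j. submodule class_ring (V j) (module_vec TYPE(complex) n)"
    and mono: "\<And>j. j < n \<Longrightarrow> V j \<subseteq> V (Suc j)"
    and strict: "\<And>j. j < n \<Longrightarrow> \<not> V (Suc j) \<subseteq> V j"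
    and nz: "\<exists>v\<in>V 0. v \<noteq> 0\<^sub>v n"
  shows False
proof -
  interpret vec_space "TYPE(complex)" n .
  have subc: "V j \<subseteq> carrier_vec n" for j using sub[of j] unfolding submodule_def by auto
  have "\<exists>S. S \<subseteq> V j \<and> lin_indpt S \<and> finite S \<and> card S = Suc j" if "j \<le> n" for j
    using that
  proof (induction j)
    case 0
    obtain v where v: "v \<in> V 0" "v \<noteq> 0\<^sub>v n" using nz by auto
    have "v \<notin> span {}" using v(2) by (auto simp: span_def lincomb_def)
    then have "lin_indpt ({} \<union> {v})"
      using lin_dep_iff_in_span[of "{}" v] v subc by (auto simp: lin_dep_def)
    then show ?case using v by (intro exI[of _ "{v}"]) auto
  next
    case (Suc j)
    then obtain S where S: "S \<subseteq> V j" "lin_indpt S" "finite S" "card S = Suc j" by auto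
    obtain w where w: "w \<in> V (Suc j)" "w \<notin> V j" using strict[of j] Suc.prems by auto
    have "span S \<subseteq> V j" by (rule span_is_subset[OF S(1) sub])
    then have "w \<notin> span S" "w \<notin> S" using w S by auto
    then have "lin_indpt (S \<union> {w})" using lin_dep_iff_in_span[OF _ S(2)] S subc w by blast
    moreover have "S \<union> {w} \<subseteq> V (Suc j)" using S(1) mono[of j] Suc.prems w by auto
    moreover have "card (S \<union> {w}) = Suc (Suc j)" using S \<open>w \<notin> S\<close> by simp
    ultimately show ?case using S(3) by (intro exI[of _ "S \<union> {w}"]) auto
  qed
  then obtain S where S: "S \<subseteq> V n" "lin_indpt S" "finite S" "card S = Suc n" by auto
  have "card S \<le> dim" using li_le_dim(2)[OF fin_dim _ S(2)] S(1) subc by auto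
  then show False using S(4) dim_is_n by simp
qed


section \<open>Congruences and super-operators\<close>

text \<open>A congruence \<open>A \<mapsto> M A M^\<dagger>\<close> preserves positivity, since
  \<open><v, M A M^\<dagger> v> = <M^\<dagger> v, A M^\<dagger> v>\<close>.\<close>

definition conj_vec :: "complex vec \<Rightarrow> complex vec" where
  "conj_vec u = vec (dim_vec u) (\<lambda>i. cnj (u $ i))"

lemma hform_scalar_prod:
  assumes A: "A \<in> carrier_mat n n" and u: "u \<in> carrier_vec n" and w: "w \<in> carrier_vec n"
  shows "hform n A u w = conj_vec u \<bullet> (A *\<^sub>v w)"
proof -
  have "conj_vec u \<bullet> (A *\<^sub>v w) = (\<Sum>i<n. cnj (u $ i) * (\<Sum>j<n. A $$ (i,j) * w $ j))"
    using A u w by (auto simp: conj_vec_def atLeast0LessThan row_def scalar_prod_def intro!: sum.cong)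
  then show ?thesis unfolding hform_def by (simp add: sum_distrib_left mult.assoc)
qed

lemma adj_carrier[simp]: "M \<in> carrier_mat n n \<Longrightarrow> adj M \<in> carrier_mat n n"
  unfolding adj_def by (metis carrier_matD(1) carrier_matD(2) mat_carrier)

lemma adj_mult_vec_carrier[simp]: "M \<in> carrier_mat n n \<Longrightarrow> v \<in> carrier_vec n \<Longrightarrow> adj M *\<^sub>v v \<in> carrier_vec n"
  using mult_mat_vec_carrier[OF adj_carrier] by blast

lemma congruence_carrier[simp]:
  "M \<in> carrier_mat n n \<Longrightarrow> A \<in> carrier_mat n n \<Longrightarrow> M * A * adj M \<in> carrier_mat n n"
  by (meson adj_carrier mult_carrier_mat)

lemma conj_vec_carrier[simp]: "u \<in> carrier_vec n \<Longrightarrow> conj_vec u \<in> carrier_vec n"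
  unfolding conj_vec_def by (metis carrier_vecD vec_carrier)

lemma transpose_conj_vec:
  assumes M: "M \<in> carrier_mat n n" and v: "v \<in> carrier_vec n"
  shows "transpose_mat M *\<^sub>v conj_vec v = conj_vec (adj M *\<^sub>v v)"
proof (rule eq_vecI)
  show "dim_vec (transpose_mat M *\<^sub>v conj_vec v) = dim_vec (conj_vec (adj M *\<^sub>v v))"
    using M v by (simp add: conj_vec_def adj_def)
  fix k assume "k < dim_vec (conj_vec (adj M *\<^sub>v v))"
  then have k: "k < n" using M by (simp add: conj_vec_def adj_def)
  have "(transpose_mat M *\<^sub>v conj_vec v) $ k = cnj (\<Sum>i<n. cnj (M $$ (i,k)) * v $ i)"
    using M v k by (auto simp: scalar_prod_def conj_vec_def atLeast0LessThan intro!: sum.cong)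
  also have "(\<Sum>i<n. cnj (M $$ (i,k)) * v $ i) = (adj M *\<^sub>v v) $ k"
    using M v k by (auto simp: scalar_prod_def adj_def atLeast0LessThan intro!: sum.cong)
  finally show "(transpose_mat M *\<^sub>v conj_vec v) $ k = conj_vec (adj M *\<^sub>v v) $ k"
    using M k by (simp add: conj_vec_def adj_def)
qed

lemma hform_congruence:
  assumes M: "M \<in> carrier_mat n n" and A: "A \<in> carrier_mat n n" and v: "v \<in> carrier_vec n"
  shows "hform n (M * A * adj M) v v = hform n A (adj M *\<^sub>v v) (adj M *\<^sub>v v)"
proof -
  define w where "w = adj M *\<^sub>v v"
  have wc: "w \<in> carrier_vec n" using M v by (simp add: w_def)
  have "(M * A * adj M) *\<^sub>v v = M *\<^sub>v (A *\<^sub>v w)"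
    using M A v by (simp add: w_def assoc_mult_mat_vec[of _ n n _ n])
  then have "hform n (M * A * adj M) v v = conj_vec v \<bullet> (M *\<^sub>v (A *\<^sub>v w))"
    using hform_scalar_prod[of "M * A * adj M" n v v] M A v by simp
  also have "\<dots> = (transpose_mat M *\<^sub>v conj_vec v) \<bullet> (A *\<^sub>v w)"
    using transpose_vec_mult_scalar[OF M, of "A *\<^sub>v w" "conj_vec v"] A wc v by simp
  also have "\<dots> = conj_vec w \<bullet> (A *\<^sub>v w)" using transpose_conj_vec[OF M v] w_def by simp
  also have "\<dots> = hform n A w w" using hform_scalar_prod[OF A wc wc] by simp
  finally show ?thesis by (simp add: w_def)
qed

lemma positive_op_congruence:
  assumes M: "M \<in> carrier_mat n n" and A: "positive_op n A"
  shows "positive_op n (M * A * adj M)"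
proof (rule positive_opI)
  have cA: "A \<in> carrier_mat n n" using A positive_op_carrier by auto
  then show "M * A * adj M \<in> carrier_mat n n" using M by simp
  fix v :: "complex vec" assume v: "v \<in> carrier_vec n"
  show "nonneg (hform n (M * A * adj M) v v)"
    using hform_congruence[OF M cA v] positive_op_nonneg[OF A] M v by simp
qed

text \<open>The trivial ampliation of a map is the map itself, so completely positive maps are positive.\<close>

lemma ampliate_1:
  assumes X: "X \<in> carrier_mat d d" and EX: "E X \<in> carrier_mat d d"
  shows "ampliate 1 d E X = E X"
proof -
  have "mat d d (\<lambda>(k,l). X $$ (k, l)) = X" using X by (intro eq_matI) auto
  then show ?thesis using EX by (intro eq_matI) (auto simp: ampliate_def)
qed

lemma completely_positive_positive:
  assumes "completely_positive d E" "positive_op d X" "E X \<in> carrier_mat d d"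
  shows "positive_op d (E X)"
  using assms ampliate_1[of X d E] positive_op_carrier[OF assms(2)]
  unfolding completely_positive_def by (metis mult_1)

locale qprogram =
  fixes d m :: nat and E :: "nat \<Rightarrow> complex mat \<Rightarrow> complex mat" and M1 :: "complex mat"
  assumes super: "\<And>k. k \<in> {1..m} \<Longrightarrow> super_operator d (E k)"
    and M1: "M1 \<in> carrier_mat d d"
begin

definition word :: "nat list \<Rightarrow> bool" where
  "word f \<longleftrightarrow> set f \<subseteq> {1..m}"

lemma E_linear: "k \<in> {1..m} \<Longrightarrow> linear_op_map d (E k)"
  using super by (simp add: super_operator_def)

lemma F_carrier: "k \<in> {1..m} \<Longrightarrow> X \<in> carrier_mat d d \<Longrightarrow> Fk E M1 k X \<in> carrier_mat d d"
  using E_linear M1 unfolding Fk_def linear_op_map_def by simp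

lemma F_positive: "k \<in> {1..m} \<Longrightarrow> positive_op d X \<Longrightarrow> positive_op d (Fk E M1 k X)"
  using super F_carrier positive_op_congruence[OF M1] positive_op_carrier
  unfolding Fk_def super_operator_def by (metis completely_positive_positive)

lemma F_add:
  assumes k: "k \<in> {1..m}" and A: "A \<in> carrier_mat d d" and B: "B \<in> carrier_mat d d"
  shows "Fk E M1 k (A + B) = Fk E M1 k A + Fk E M1 k B"
proof -
  have "M1 * (A + B) = M1 * A + M1 * B" using M1 A B by (simp add: mult_add_distrib_mat)
  moreover have "(M1 * A + M1 * B) * adj M1 = M1 * A * adj M1 + M1 * B * adj M1"
    using M1 A B by (intro add_mult_distrib_mat[OF _ _ adj_carrier[OF M1]]) auto
  ultimately have "M1 * (A + B) * adj M1 = M1 * A * adj M1 + M1 * B * adj M1" by simp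
  then show ?thesis using E_linear[OF k] M1 A B unfolding Fk_def linear_op_map_def by simp
qed

lemma F_smult:
  assumes k: "k \<in> {1..m}" and A: "A \<in> carrier_mat d d"
  shows "Fk E M1 k (c \<cdot>\<^sub>m A) = c \<cdot>\<^sub>m Fk E M1 k A"
proof -
  have "M1 * (c \<cdot>\<^sub>m A) = c \<cdot>\<^sub>m (M1 * A)" using M1 A by (simp add: mult_smult_distrib)
  moreover have "(c \<cdot>\<^sub>m (M1 * A)) * adj M1 = c \<cdot>\<^sub>m (M1 * A * adj M1)"
    using M1 A by (intro mult_smult_assoc_mat[OF _ adj_carrier[OF M1]]) auto
  ultimately have "M1 * (c \<cdot>\<^sub>m A) * adj M1 = c \<cdot>\<^sub>m (M1 * A * adj M1)" by simp
  then show ?thesis using E_linear[OF k] M1 A unfolding Fk_def linear_op_map_def by simp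
qed

lemma F_minus:
  assumes k: "k \<in> {1..m}" and A: "A \<in> carrier_mat d d" and B: "B \<in> carrier_mat d d"
  shows "Fk E M1 k (A - B) = Fk E M1 k A - Fk E M1 k B"
proof -
  have minus: "X - Y = X + (-1) \<cdot>\<^sub>m Y" if "X \<in> carrier_mat d d" "Y \<in> carrier_mat d d" for X Y :: "complex mat"
    using that by (intro eq_matI) auto
  show ?thesis
    using minus[OF A B] minus[OF F_carrier[OF k A] F_carrier[OF k B]] F_add[OF k A] F_smult[OF k B] B
    by simp
qed

lemma F_zero:
  assumes k: "k \<in> {1..m}"
  shows "Fk E M1 k (0\<^sub>m d d) = 0\<^sub>m d d"
proof -
  have zero: "(0::complex) \<cdot>\<^sub>m X = 0\<^sub>m d d" if "X \<in> carrier_mat d d" for X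
    using that by (intro eq_matI) auto
  show ?thesis using F_smult[OF k zero_carrier_mat, of 0] zero[of "0\<^sub>m d d"] zero[OF F_carrier[OF k zero_carrier_mat]]
    by simp
qed

lemma F_dominated:
  assumes k: "k \<in> {1..m}" and A: "positive_op d A" and B: "positive_op d B" and "dominated d A B"
  shows "dominated d (Fk E M1 k A) (Fk E M1 k B)"
proof -
  obtain c where c: "c \<ge> 0" "positive_op d (complex_of_real c \<cdot>\<^sub>m B - A)"
    using assms(4) dominated_def by blast
  have "Fk E M1 k (complex_of_real c \<cdot>\<^sub>m B - A) = complex_of_real c \<cdot>\<^sub>m Fk E M1 k B - Fk E M1 k A"
    using F_minus[OF k _ positive_op_carrier[OF A]] F_smult[OF k positive_op_carrier[OF B]] B
    by (simp add: positive_op_carrier)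
  then show ?thesis using F_positive[OF k c(2)] c(1) dominated_def by metis
qed

lemma Fstr_Nil[simp]: "Fstr E M1 [] X = X"
  and Fstr_Cons: "Fstr E M1 (k # f) X = Fstr E M1 f (Fk E M1 k X)"
  and Fstr_append: "Fstr E M1 (f @ g) X = Fstr E M1 g (Fstr E M1 f X)"
  and Fstr_snoc: "Fstr E M1 (f @ [k]) X = Fk E M1 k (Fstr E M1 f X)"
  by (simp_all add: Fstr_def)

lemma Fstr_positive: "word f \<Longrightarrow> positive_op d X \<Longrightarrow> positive_op d (Fstr E M1 f X)"
  by (induction f arbitrary: X) (auto simp: word_def Fstr_def F_positive)

lemma Fstr_add: "word f \<Longrightarrow> A \<in> carrier_mat d d \<Longrightarrow> B \<in> carrier_mat d d \<Longrightarrow>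
   Fstr E M1 f (A + B) = Fstr E M1 f A + Fstr E M1 f B"
  by (induction f arbitrary: A B) (auto simp: word_def Fstr_Cons F_carrier F_add)

lemma Fstr_zero: "word f \<Longrightarrow> Fstr E M1 f (0\<^sub>m d d) = 0\<^sub>m d d"
  by (induction f) (auto simp: word_def Fstr_Cons F_zero)

lemma Fstr_dominated:
  "word f \<Longrightarrow> positive_op d A \<Longrightarrow> positive_op d B \<Longrightarrow> dominated d A B
     \<Longrightarrow> dominated d (Fstr E M1 f A) (Fstr E M1 f B)"
  by (induction f arbitrary: A B) (auto simp: word_def Fstr_Cons F_positive F_dominated)

lemma Fstr_prefix_nonzero:
  "word g \<Longrightarrow> Fstr E M1 (f @ g) X \<noteq> 0\<^sub>m d d \<Longrightarrow> Fstr E M1 f X \<noteq> 0\<^sub>m d d"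
  by (metis Fstr_append Fstr_zero)

end


section \<open>Reachability sums and short witnesses\<close>

context qprogram
begin

text \<open>\<open>sum_F j X = F_1 X + ... + F_j X\<close>, and \<open>reach Y j = \<Sum> {F_\<tau> Y | \<tau> word, |\<tau>| \<le> j}\<close>,
  computed by \<open>reach Y (j+1) = Y + sum_F m (reach Y j)\<close>.\<close>

fun sum_F :: "nat \<Rightarrow> complex mat \<Rightarrow> complex mat" where
  "sum_F 0 X = 0\<^sub>m d d"
| "sum_F (Suc k) X = Fk E M1 (Suc k) X + sum_F k X"

fun reach :: "complex mat \<Rightarrow> nat \<Rightarrow> complex mat" where
  "reach Y 0 = Y"
| "reach Y (Suc j) = Y + sum_F m (reach Y j)"

lemma sum_F_carrier: "j \<le> m \<Longrightarrow> X \<in> carrier_mat d d \<Longrightarrow> sum_F j X \<in> carrier_mat d d"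
  by (induction j) (auto intro!: F_carrier)

lemma sum_F_positive: "j \<le> m \<Longrightarrow> positive_op d X \<Longrightarrow> positive_op d (sum_F j X)"
  by (induction j) (auto intro!: positive_op_add F_positive positive_op_zero)

lemma reach_positive: "positive_op d Y \<Longrightarrow> positive_op d (reach Y j)"
  by (induction j) (auto intro!: positive_op_add sum_F_positive)

lemma sum_F_dominated:
  assumes "j \<le> m" "positive_op d A" "positive_op d B" "dominated d A B"
  shows "dominated d (sum_F j A) (sum_F j B)"
  using assms(1)
proof (induction j)
  case 0 then show ?case using dominated_refl[OF positive_op_zero] by simp
next
  case (Suc j)
  then have k: "Suc j \<in> {1..m}" by simp
  show ?case
    using dominated_add[OF F_positive[OF k assms(2)] sum_F_positive[OF _ assms(2)]
        F_positive[OF k assms(3)] sum_F_positive[OF _ assms(3)]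
        F_dominated[OF k assms(2-4)] Suc.IH] Suc.prems by simp
qed

lemma F_dominated_sum_F:
  assumes "k \<in> {1..j}" "j \<le> m" "positive_op d X"
  shows "dominated d (Fk E M1 k X) (sum_F j X)"
  using assms
proof (induction j)
  case (Suc j)
  have P: "positive_op d (Fk E M1 (Suc j) X)" "positive_op d (sum_F j X)"
    using Suc.prems by (auto intro!: F_positive sum_F_positive)
  show ?case
  proof (cases "k = Suc j")
    case True then show ?thesis using dominated_summand(1)[OF P] by simp
  next
    case False
    then have k: "k \<in> {1..j}" and "dominated d (Fk E M1 k X) (sum_F j X)" using Suc by auto
    then show ?thesis
      using dominated_trans[OF F_positive[OF _ Suc.prems(3)] P(2) positive_op_add[OF P] _ dominated_summand(2)[OF P]]
        Suc.prems(2)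
      by simp
  qed
qed simp

lemma reach_Suc_mono:
  assumes Y: "positive_op d Y" and "dominated d (reach Y i) (reach Y j)"
  shows "dominated d (reach Y (Suc i)) (reach Y (Suc j))"
  using dominated_add[OF Y sum_F_positive[OF order_refl reach_positive[OF Y]]
      Y sum_F_positive[OF order_refl reach_positive[OF Y]]
      dominated_refl[OF Y] sum_F_dominated[OF order_refl reach_positive[OF Y] reach_positive[OF Y] assms(2)]]
  by simp

lemma reach_dominated_Suc: "positive_op d Y \<Longrightarrow> dominated d (reach Y j) (reach Y (Suc j))"
proof (induction j)
  case 0
  then show ?case
    using dominated_summand(1)[OF _ sum_F_positive[OF order_refl]] by simp
qed (use reach_Suc_mono in blast)

lemma reach_mono:
  assumes Y: "positive_op d Y" and "j \<le> i"
  shows "dominated d (reach Y j) (reach Y i)"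
  using assms(2)
proof (induction i rule: dec_induct)
  case base then show ?case using dominated_refl[OF reach_positive[OF Y]] .
next
  case (step i)
  then show ?case
    using dominated_trans[OF reach_positive reach_positive reach_positive _ reach_dominated_Suc] Y by blast
qed

lemma reach_stable:
  assumes Y: "positive_op d Y" and st: "dominated d (reach Y (Suc j)) (reach Y j)" and "j \<le> i"
  shows "dominated d (reach Y i) (reach Y j)"
  using assms(3)
proof (induction i rule: dec_induct)
  case base then show ?case using dominated_refl[OF reach_positive[OF Y]] .
next
  case (step i)
  then have "dominated d (reach Y (Suc i)) (reach Y (Suc j))" using reach_Suc_mono[OF Y] by blast
  then show ?case using dominated_trans[OF reach_positive reach_positive reach_positive _ st] Y by blast
qed

text \<open>The dimension argument: the supports of \<open>reach Y j\<close> form an increasing chain of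
  subspaces of \<open>C^d\<close>, nonzero if \<open>Y \<noteq> 0\<close>, so the chain stops growing before step \<open>d\<close>.\<close>

lemma reach_stabilises:
  assumes Y: "positive_op d Y" and nz: "Y \<noteq> 0\<^sub>m d d"
  shows "\<exists>j<d. dominated d (reach Y (Suc j)) (reach Y j)"
proof (rule ccontr)
  assume "\<not> ?thesis"
  then have grows: "\<And>j. j < d \<Longrightarrow> \<not> supp d (reach Y (Suc j)) \<subseteq> supp d (reach Y j)"
    using supp_subset_imp_dominated[OF reach_positive[OF Y] reach_positive[OF Y]] by blast
  obtain i where "i \<in> diag_support d Y"
    using nz positive_op_diag_zero[OF Y] by (auto simp: diag_support_def)
  then obtain v where "v \<in> supp d Y" "v \<noteq> 0\<^sub>v d" using rank_one_peel[OF Y] by metis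
  then show False
    using subspace_chain_bound[of "\<lambda>j. supp d (reach Y j)" d] grows
      supp_submodule[OF reach_positive[OF Y]]
      supp_mono[OF reach_positive[OF Y] reach_positive[OF Y] reach_dominated_Suc[OF Y]]
    by auto
qed

lemma reach_bound:
  assumes Y: "positive_op d Y" and nz: "Y \<noteq> 0\<^sub>m d d"
  shows "dominated d (reach Y i) (reach Y (d - 1))"
proof -
  obtain j where j: "j < d" "dominated d (reach Y (Suc j)) (reach Y j)"
    using reach_stabilises[OF Y nz] by blast
  show ?thesis
  proof (cases "j \<le> i")
    case True
    have "dominated d (reach Y i) (reach Y j)" by (rule reach_stable[OF Y j(2) True])
    moreover have "dominated d (reach Y j) (reach Y (d - 1))" using j(1) by (intro reach_mono[OF Y]) simp
    ultimately show ?thesis using dominated_trans[OF reach_positive reach_positive reach_positive] Y by blast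
  next
    case False
    then show ?thesis using j(1) by (intro reach_mono[OF Y]) simp
  qed
qed

lemma Fstr_dominated_reach:
  assumes Y: "positive_op d Y"
  shows "word \<sigma> \<Longrightarrow> dominated d (Fstr E M1 \<sigma> Y) (reach Y (length \<sigma>))"
proof (induction \<sigma> rule: rev_induct)
  case Nil then show ?case using dominated_refl[OF Y] by simp
next
  case (snoc k \<sigma>)
  let ?R = "reach Y (length \<sigma>)"
  have \<sigma>: "word \<sigma>" and k: "k \<in> {1..m}" using snoc.prems by (auto simp: word_def)
  have P: "positive_op d (Fstr E M1 \<sigma> Y)" "positive_op d ?R"
    using Fstr_positive[OF \<sigma> Y] reach_positive[OF Y] .
  have "dominated d (Fk E M1 k (Fstr E M1 \<sigma> Y)) (Fk E M1 k ?R)"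
    using F_dominated[OF k P snoc.IH[OF \<sigma>]] .
  moreover have "dominated d (Fk E M1 k ?R) (sum_F m ?R)"
    using F_dominated_sum_F[OF k order_refl P(2)] .
  moreover have "dominated d (sum_F m ?R) (reach Y (Suc (length \<sigma>)))"
    using dominated_summand(2)[OF Y sum_F_positive[OF order_refl P(2)]] by simp
  ultimately have "dominated d (Fk E M1 k (Fstr E M1 \<sigma> Y)) (reach Y (Suc (length \<sigma>)))"
    using dominated_trans[OF F_positive[OF k P(1)] F_positive[OF k P(2)] reach_positive[OF Y]]
      dominated_trans[OF F_positive[OF k P(2)] sum_F_positive[OF order_refl P(2)] reach_positive[OF Y]]
    by blast
  then show ?case by (simp add: Fstr_snoc)
qed

lemma sum_F_killed:
  assumes "j \<le> m" "X \<in> carrier_mat d d" "word g"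
    and "\<And>k. k \<in> {1..m} \<Longrightarrow> Fstr E M1 g (Fk E M1 k X) = 0\<^sub>m d d"
  shows "Fstr E M1 g (sum_F j X) = 0\<^sub>m d d"
  using assms(1) by (induction j) (auto simp: Fstr_zero Fstr_add F_carrier sum_F_carrier assms(2-4))

lemma reach_killed:
  assumes Y: "positive_op d Y"
  shows "word g \<Longrightarrow> (\<And>\<tau>. word \<tau> \<Longrightarrow> length \<tau> \<le> j \<Longrightarrow> Fstr E M1 g (Fstr E M1 \<tau> Y) = 0\<^sub>m d d)
     \<Longrightarrow> Fstr E M1 g (reach Y j) = 0\<^sub>m d d"
proof (induction j arbitrary: g)
  case 0 then show ?case using "0.prems"(2)[of "[]"] by (simp add: word_def)
next
  case (Suc j)
  have cR: "reach Y j \<in> carrier_mat d d" using reach_positive[OF Y] positive_op_carrier by blast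
  have "Fstr E M1 (k # g) (reach Y j) = 0\<^sub>m d d" if k: "k \<in> {1..m}" for k
  proof (rule Suc.IH)
    show "word (k # g)" using k Suc.prems(1) by (simp add: word_def)
    fix \<tau> assume "word \<tau>" "length \<tau> \<le> j"
    then show "Fstr E M1 (k # g) (Fstr E M1 \<tau> Y) = 0\<^sub>m d d"
      using Suc.prems(2)[of "\<tau> @ [k]"] k by (simp add: word_def Fstr_Cons Fstr_snoc)
  qed
  then have "Fstr E M1 g (sum_F m (reach Y j)) = 0\<^sub>m d d"
    by (intro sum_F_killed[OF order_refl cR Suc.prems(1)]) (simp add: Fstr_Cons)
  moreover have "Fstr E M1 g Y = 0\<^sub>m d d" using Suc.prems(2)[of "[]"] by (simp add: word_def)
  ultimately show ?case
    using Fstr_add[OF Suc.prems(1)] sum_F_carrier[OF order_refl cR] positive_op_carrier[OF Y] by simp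
qed

lemma short_witness:
  assumes d1: "d \<ge> 1" and Y: "positive_op d Y" and \<sigma>: "word \<sigma>" and g: "word g"
    and nz: "Fstr E M1 g (Fstr E M1 \<sigma> Y) \<noteq> 0\<^sub>m d d"
  shows "\<exists>\<tau>. word \<tau> \<and> length \<tau> < d \<and> Fstr E M1 g (Fstr E M1 \<tau> Y) \<noteq> 0\<^sub>m d d"
proof (rule ccontr)
  assume "\<not> ?thesis"
  then have "Fstr E M1 g (reach Y (d - 1)) = 0\<^sub>m d d"
    using d1 by (intro reach_killed[OF Y g]) fastforce
  moreover have "Y \<noteq> 0\<^sub>m d d" using nz Fstr_zero[OF \<sigma>] Fstr_zero[OF g] by auto
  then have "dominated d (Fstr E M1 \<sigma> Y) (reach Y (d - 1))"
    using Fstr_dominated_reach[OF Y \<sigma>] reach_bound[OF Y]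
      dominated_trans[OF Fstr_positive[OF \<sigma> Y] reach_positive[OF Y] reach_positive[OF Y]] by blast
  then have "dominated d (Fstr E M1 g (Fstr E M1 \<sigma> Y)) (Fstr E M1 g (reach Y (d - 1)))"
    by (rule Fstr_dominated[OF g Fstr_positive[OF \<sigma> Y] reach_positive[OF Y]])
  ultimately show False
    using dominated_zero[OF Fstr_positive[OF g Fstr_positive[OF \<sigma> Y]]] nz by simp
qed

end


section \<open>Paths and the blocks of \<open>\<Pi>\<close>\<close>

definition path_cat :: "nat list \<Rightarrow> (nat \<Rightarrow> nat) \<Rightarrow> (nat \<Rightarrow> nat)" where
  "path_cat u s = (\<lambda>i. if i < length u then u ! i else s (i - length u))"

definition path_drop :: "(nat \<Rightarrow> nat) \<Rightarrow> nat \<Rightarrow> (nat \<Rightarrow> nat)" where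
  "path_drop s c = (\<lambda>i. s (i + c))"

lemma prefix_length[simp]: "length (prefix s n) = n"
  and prefix_0[simp]: "prefix s 0 = []"
  and prefix_Suc: "prefix s (Suc n) = prefix s n @ [s n]"
  by (simp_all add: prefix_def)

lemma prefix_path_cat: "prefix (path_cat u s) (length u + n) = u @ prefix s n"
  by (rule nth_equalityI) (auto simp: prefix_def path_cat_def nth_append)

lemma path_cat_prefix_drop: "path_cat (prefix s c) (path_drop s c) = s"
  by (rule ext) (simp add: path_cat_def path_drop_def prefix_def)

lemma prefix_add: "prefix s (n + k) = prefix s n @ map s [n..<n+k]"
proof -
  have "[0..<n+k] = [0..<n] @ [n..<n+k]" by (rule upt_add_eq_append) simp
  then show ?thesis unfolding prefix_def by simp
qed

lemma paths_prefix: "s \<in> paths m \<Longrightarrow> set (prefix s n) \<subseteq> {1..m}"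
  by (auto simp: paths_def prefix_def)

lemma fair_path_drop:
  assumes s: "s \<in> fair_paths m"
  shows "path_drop s c \<in> fair_paths m"
proof -
  have "infinite {i. path_drop s c i = k}" if k: "k \<in> {1..m}" for k
    unfolding infinite_nat_iff_unbounded_le
  proof
    fix N
    have "infinite {i. s i = k}" using s k by (simp add: fair_paths_def)
    then obtain i where "i \<ge> N + c" "s i = k" unfolding infinite_nat_iff_unbounded_le by blast
    then show "\<exists>i\<ge>N. i \<in> {i. path_drop s c i = k}"
      by (intro exI[of _ "i - c"]) (auto simp: path_drop_def)
  qed
  moreover have "path_drop s c \<in> paths m" using s by (simp add: fair_paths_def paths_def path_drop_def)
  ultimately show ?thesis by (simp add: fair_paths_def)
qed

lemma finite_short_words: "finite {\<tau>::nat list. set \<tau> \<subseteq> {1..m} \<and> length \<tau> < d}"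
  by (rule finite_subset[OF _ finite_lists_length_le[of "{1..m}" d]]) auto

lemma concat_path:
  fixes ws :: "nat \<Rightarrow> nat list"
  assumes ne: "\<And>i. ws i \<noteq> []"
  defines "C \<equiv> \<lambda>i. concat (map ws [0..<i])"
  obtains t where "\<And>n. prefix t n = take n (C n)"
    and "\<And>i j. j < length (ws i) \<Longrightarrow> t (length (C i) + j) = ws i ! j"
proof
  have CS: "C (Suc i) = C i @ ws i" for i by (simp add: C_def)
  have len: "i \<le> length (C i)" for i
  proof (induction i)
    case (Suc i)
    have "length (ws i) \<ge> 1" using ne[of i] by (cases "ws i") auto
    then show ?case using Suc by (simp add: CS)
  qed simp
  have C_prefix: "C j ! k = C i ! k" if "k < length (C i)" "i \<le> j" for i j k
  proof -
    have "[0..<j] = [0..<i] @ [i..<j]" using that(2) by (metis le_add_diff_inverse upt_add_eq_append zero_le)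
    then have "C j = C i @ concat (map ws [i..<j])" by (simp add: C_def)
    then show ?thesis using that(1) by (simp add: nth_append)
  qed
  define t where "t n = C (Suc n) ! n" for n
  show "prefix t n = take n (C n)" for n
  proof (rule nth_equalityI)
    show "length (prefix t n) = length (take n (C n))" using len[of n] by simp
    fix k assume "k < length (prefix t n)"
    then show "prefix t n ! k = take n (C n) ! k"
      using C_prefix[of k "Suc k" n] len[of "Suc k"] by (simp add: t_def prefix_def)
  qed
  show "t (length (C i) + j) = ws i ! j" if j: "j < length (ws i)" for i j
  proof -
    have "t (length (C i) + j) = C (Suc (length (C i) + j)) ! (length (C i) + j)" by (simp add: t_def)
    also have "\<dots> = C (Suc i) ! (length (C i) + j)"
      using C_prefix[of "length (C i) + j" "Suc i" "Suc (length (C i) + j)"] j len[of i] by (simp add: CS)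
    also have "\<dots> = ws i ! j" by (simp add: CS nth_append)
    finally show ?thesis .
  qed
qed

definition block_word :: "nat list \<Rightarrow> (nat \<Rightarrow> nat list) \<Rightarrow> nat \<Rightarrow> nat list" where
  "block_word p \<sigma> r = concat (map (\<lambda>i. [p ! i] @ (if i < r - 1 then \<sigma> i else [])) [0..<r])"

definition partial_block :: "nat \<Rightarrow> nat \<Rightarrow> nat \<Rightarrow> nat list \<Rightarrow> (nat \<Rightarrow> nat list) \<Rightarrow> bool" where
  "partial_block m d r p \<sigma> \<longleftrightarrow> distinct p \<and> length p = r \<and> set p \<subseteq> {1..m} \<and>
     (\<forall>i<r-1. set (\<sigma> i) \<subseteq> {1..m} \<and> length (\<sigma> i) < d)"

lemma block_word_snoc:
  assumes "length p = Suc r"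
  shows "block_word (p @ [k]) (\<sigma>(r := \<tau>)) (Suc (Suc r)) = block_word p \<sigma> (Suc r) @ \<tau> @ [k]"
proof -
  have m: "map (\<lambda>i. [(p @ [k]) ! i] @ (if i < Suc (Suc r) - 1 then (\<sigma>(r := \<tau>)) i else [])) [0..<r]
      = map (\<lambda>i. [p ! i] @ (if i < Suc r - 1 then \<sigma> i else [])) [0..<r]"
    using assms by (intro map_cong) (auto simp: nth_append)
  have u: "[0..<Suc (Suc r)] = [0..<r] @ [r, Suc r]" "[0..<Suc r] = [0..<r] @ [r]" by simp_all
  show ?thesis unfolding block_word_def u map_append concat_append m using assms by (simp add: nth_append)
qed

lemma partial_block_snoc:
  assumes "partial_block m d (Suc r) p \<sigma>" "k \<in> {1..m}" "k \<notin> set p" "set \<tau> \<subseteq> {1..m}" "length \<tau> < d"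
  shows "partial_block m d (Suc (Suc r)) (p @ [k]) (\<sigma>(r := \<tau>))"
  using assms by (auto simp: partial_block_def)

lemma partial_block_set:
  assumes "partial_block m d r p \<sigma>"
  shows "set (block_word p \<sigma> r) \<subseteq> {1..m}"
proof
  fix x assume "x \<in> set (block_word p \<sigma> r)"
  then obtain i where i: "i < r" "x = p ! i \<or> (i < r - 1 \<and> x \<in> set (\<sigma> i))"
    unfolding block_word_def by (auto split: if_splits)
  have "length p = r" "set p \<subseteq> {1..m}" "\<forall>i<r-1. set (\<sigma> i) \<subseteq> {1..m}"
    using assms by (auto simp: partial_block_def)
  then show "x \<in> {1..m}" using i subsetD nth_mem[of i p] by metis
qed

lemma partial_block_Pi_set:
  assumes "partial_block m d m p \<sigma>"
  shows "block_word p \<sigma> m \<in> Pi_set m d"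
proof -
  have "set p = {1..m}" using assms distinct_card[of p] by (intro card_seteq) (auto simp: partial_block_def)
  then have "p \<in> perms m" using assms by (simp add: perms_def partial_block_def)
  then show ?thesis using assms unfolding Pi_set_def block_word_def partial_block_def by blast
qed

lemma Pi_set_props:
  assumes w: "w \<in> Pi_set m d" and m1: "m \<ge> 1"
  shows "set w \<subseteq> {1..m}" "\<And>k. k \<in> {1..m} \<Longrightarrow> k \<in> set w" "w \<noteq> []"
proof -
  obtain p \<sigma> where p: "p \<in> perms m" and \<sigma>: "\<forall>i < m - 1. set (\<sigma> i) \<subseteq> {1..m} \<and> length (\<sigma> i) < d"
    and we: "w = block_word p \<sigma> m"
    using w unfolding Pi_set_def block_word_def by blast
  have lp: "length p = m" and sp: "set p = {1..m}" using p unfolding perms_def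
    by (auto simp: distinct_card[symmetric])
  then have "partial_block m d m p \<sigma>" using p \<sigma> by (simp add: partial_block_def perms_def)
  then show "set w \<subseteq> {1..m}" using partial_block_set we by blast
  show k: "k \<in> set w" if "k \<in> {1..m}" for k
  proof -
    have "k \<in> set p" using that sp by simp
    then obtain i where "i < length p" "p ! i = k" unfolding in_set_conv_nth by blast
    then show ?thesis unfolding we block_word_def using lp by force
  qed
  show "w \<noteq> []" using k[of 1] m1 by auto
qed

lemma block_cover:
  fixes b :: "nat \<Rightarrow> nat"
  assumes "b 0 = 0" "\<And>i. b i < b (Suc i)"
  shows "\<exists>i. b i \<le> n \<and> n < b (Suc i)"
proof (induction n)
  case 0 then show ?case using assms(1) assms(2)[of 0] by (intro exI[of _ 0]) simp
next
  case (Suc n)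
  then obtain i where i: "b i \<le> n" "n < b (Suc i)" by blast
  show ?case
  proof (cases "Suc n < b (Suc i)")
    case True then show ?thesis using i by (intro exI[of _ i]) simp
  next
    case False
    then have "b (Suc i) \<le> Suc n \<and> Suc n < b (Suc (Suc i))" using i assms(2)[of "Suc i"] by simp
    then show ?thesis by (intro exI[of _ "Suc i"])
  qed
qed

text \<open>The easy inclusion: every path of \<open>\<Pi>^\<omega>\<close> is fair, since each block contains every process.\<close>

lemma Pi_omega_fair:
  assumes m1: "m \<ge> 1" and s: "s \<in> Pi_omega m d"
  shows "s \<in> fair_paths m"
proof -
  obtain ws b where ws: "\<And>i. ws i \<in> Pi_set m d" and b0: "b 0 = 0"
    and bS: "\<And>i. b (Suc i) = b i + length (ws i)"
    and sb: "\<And>i j. j < length (ws i) \<Longrightarrow> s (b i + j) = ws i ! j"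
    using s unfolding Pi_omega_def by blast
  have bmono: "b i < b (Suc i)" for i using bS Pi_set_props(3)[OF ws m1] by simp
  have bge: "i \<le> b i" for i
  proof (induction i)
    case (Suc i) then show ?case using bmono[of i] by simp
  qed simp
  have range: "s n \<in> {1..m}" for n
  proof -
    obtain i where i: "b i \<le> n" "n < b (Suc i)" using block_cover[of b n, OF b0 bmono] by blast
    then have lt: "n - b i < length (ws i)" using bS[of i] by simp
    then have "s n = ws i ! (n - b i)" using sb[OF lt] i(1) by simp
    then show ?thesis using subsetD[OF Pi_set_props(1)[OF ws m1] nth_mem[OF lt]] by simp
  qed
  have inf: "infinite {n. s n = k}" if k: "k \<in> {1..m}" for k
    unfolding infinite_nat_iff_unbounded_le
  proof
    fix N
    obtain j where j: "j < length (ws N)" "ws N ! j = k"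
      using Pi_set_props(2)[OF ws m1 k] unfolding in_set_conv_nth by blast
    have "s (b N + j) = k" using sb[OF j(1)] j(2) by simp
    moreover have "N \<le> b N + j" using bge[of N] by simp
    ultimately show "\<exists>n\<ge>N. n \<in> {n. s n = k}" by blast
  qed
  have "s \<in> paths m" unfolding paths_def using range by simp
  then show ?thesis unfolding fair_paths_def using inf by simp
qed


section \<open>From a non-terminating fair path to a non-terminating path of \<open>\<Pi>^\<omega>\<close>\<close>

context qprogram
begin

definition alive :: "complex mat \<Rightarrow> (nat \<Rightarrow> nat) \<Rightarrow> bool" where
  "alive Y s \<longleftrightarrow> (\<forall>n. Fstr E M1 (prefix s n) Y \<noteq> 0\<^sub>m d d)"

lemma terminates_for_iff_not_alive:
  assumes "\<rho> \<noteq> 0\<^sub>m d d"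
  shows "terminates_for d E M1 \<rho> s \<longleftrightarrow> \<not> alive \<rho> s"
  unfolding terminates_for_def alive_def
proof
  assume "\<not> (\<forall>n. Fstr E M1 (prefix s n) \<rho> \<noteq> 0\<^sub>m d d)"
  then obtain n where n: "Fstr E M1 (prefix s n) \<rho> = 0\<^sub>m d d" by blast
  then have "n \<noteq> 0" using assms by (cases n) auto
  then show "\<exists>n\<ge>1. Fstr E M1 (prefix s n) \<rho> = 0\<^sub>m d d" using n by (intro exI[of _ n]) simp
qed blast

lemma alive_nonzero: "alive Y s \<Longrightarrow> Y \<noteq> 0\<^sub>m d d"
  unfolding alive_def by (metis Fstr_Nil prefix_0)

lemma alive_drop:
  assumes "alive Y s"
  shows "alive (Fstr E M1 (prefix s c) Y) (path_drop s c)"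
  unfolding alive_def
proof
  fix n
  have "prefix s (c + n) = prefix s c @ prefix (path_drop s c) n"
    using prefix_path_cat[of "prefix s c" "path_drop s c" n] by (simp add: path_cat_prefix_drop)
  then show "Fstr E M1 (prefix (path_drop s c) n) (Fstr E M1 (prefix s c) Y) \<noteq> 0\<^sub>m d d"
    using assms unfolding alive_def by (metis Fstr_append)
qed

text \<open>If \<open>F_{\<sigma> k} Y\<close> is alive along \<open>s\<close>, then for every \<open>n\<close> some short
  \<open>\<tau>\<close> keeps \<open>F_{\<tau> k} Y\<close> alive for \<open>n\<close> steps (by the short witness lemma); one of the finitely
  many short \<open>\<tau>\<close> does so for infinitely many \<open>n\<close>, hence for all \<open>n\<close>.\<close>

lemma shorten_gap:
  assumes d1: "d \<ge> 1" and Y: "positive_op d Y" and \<sigma>: "word \<sigma>" and k: "k \<in> {1..m}"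
    and s: "s \<in> paths m" and alive: "alive (Fstr E M1 (\<sigma> @ [k]) Y) s"
  shows "\<exists>\<tau>. word \<tau> \<and> length \<tau> < d \<and> alive (Fstr E M1 (\<tau> @ [k]) Y) s"
proof -
  define T where "T = {\<tau>::nat list. set \<tau> \<subseteq> {1..m} \<and> length \<tau> < d}"
  define P where "P n \<tau> \<longleftrightarrow> Fstr E M1 (k # prefix s n) (Fstr E M1 \<tau> Y) \<noteq> 0\<^sub>m d d" for n \<tau>
  have g: "word (k # prefix s n)" for n using k paths_prefix[OF s] by (auto simp: word_def)
  have "\<exists>\<tau>\<in>T. P n \<tau>" for n
  proof -
    have "Fstr E M1 (k # prefix s n) (Fstr E M1 \<sigma> Y) \<noteq> 0\<^sub>m d d"
      using alive unfolding alive_def by (simp add: Fstr_Cons Fstr_snoc)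
    from short_witness[OF d1 Y \<sigma> g this] show ?thesis unfolding T_def P_def word_def by auto
  qed
  then have "(\<Union>\<tau>\<in>T. {n. P n \<tau>}) = UNIV" by auto
  then obtain \<tau> where \<tau>: "\<tau> \<in> T" "infinite {n. P n \<tau>}"
    using finite_short_words[of m d] unfolding T_def[symmetric] by (metis finite_UN infinite_UNIV_nat)
  have "P n \<tau>" for n
  proof -
    obtain n' where n': "n' \<ge> n" "P n' \<tau>" using \<tau>(2) unfolding infinite_nat_iff_unbounded_le by blast
    have "prefix s n' = prefix s n @ map s [n..<n']"
      using prefix_add[of s n "n' - n"] n'(1) by simp
    moreover have "word (map s [n..<n'])" using s by (auto simp: word_def paths_def)
    ultimately show ?thesis
      using n'(2) Fstr_prefix_nonzero[of "map s [n..<n']" "k # prefix s n"] unfolding P_def by simp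
  qed
  then have "alive (Fstr E M1 (\<tau> @ [k]) Y) s"
    unfolding alive_def P_def by (simp add: Fstr_Cons Fstr_snoc)
  then show ?thesis using \<tau>(1) unfolding T_def word_def by auto
qed

lemma gap_to_process:
  assumes d1: "d \<ge> 1" and Y: "positive_op d Y" and s: "s \<in> fair_paths m" and alive: "alive Y s"
    and k: "k \<in> {1..m}"
  shows "\<exists>\<tau> s'. word \<tau> \<and> length \<tau> < d \<and> s' \<in> fair_paths m \<and> alive (Fstr E M1 (\<tau> @ [k]) Y) s'"
proof -
  have "infinite {i. s i = k}" using s k by (simp add: fair_paths_def)
  then obtain i where i: "s i = k" using not_finite_existsD by auto
  have s': "path_drop s (Suc i) \<in> fair_paths m" by (rule fair_path_drop[OF s])
  then have "path_drop s (Suc i) \<in> paths m" by (simp add: fair_paths_def)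
  moreover have "alive (Fstr E M1 (prefix s i @ [k]) Y) (path_drop s (Suc i))"
    using alive_drop[OF alive, of "Suc i"] i by (simp add: prefix_Suc)
  moreover have "word (prefix s i)" using paths_prefix s by (simp add: word_def fair_paths_def)
  ultimately obtain \<tau> where "word \<tau>" "length \<tau> < d" "alive (Fstr E M1 (\<tau> @ [k]) Y) (path_drop s (Suc i))"
    using shorten_gap[OF d1 Y _ k] by blast
  then show ?thesis using s' by (intro exI[of _ \<tau>] exI[of _ "path_drop s (Suc i)"]) simp
qed

lemma partial_block_missing:
  assumes "partial_block m d r p \<sigma>" "r < m"
  obtains k where "k \<in> {1..m}" "k \<notin> set p"
proof -
  have "card (set p) = r" using assms(1) distinct_card by (auto simp: partial_block_def)
  then have "\<not> {1..m} \<subseteq> set p" using assms(2) card_mono[of "set p" "{1..m}"] by auto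
  then show ?thesis using that by blast
qed

text \<open>A block of \<open>\<Pi>\<close> is built process by process: the first process is the next letter of
  the path, and each further process missing from the block is reached through a short gap.\<close>

lemma partial_block_alive:
  assumes d1: "d \<ge> 1" and Y: "positive_op d Y" and s: "s \<in> fair_paths m" and alive: "alive Y s"
  shows "1 \<le> r \<Longrightarrow> r \<le> m \<Longrightarrow>
    \<exists>p \<sigma> s'. partial_block m d r p \<sigma> \<and> s' \<in> fair_paths m \<and> alive (Fstr E M1 (block_word p \<sigma> r) Y) s'"
proof (induction r)
  case (Suc r)
  show ?case
  proof (cases r)
    case 0
    have "alive (Fstr E M1 [s 0] Y) (path_drop s 1)"
      using alive_drop[OF alive, of 1] by (simp add: prefix_def)
    moreover have "s 0 \<in> {1..m}" using s by (simp add: fair_paths_def paths_def)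
    ultimately show ?thesis using 0 fair_path_drop[OF s, of 1]
      by (intro exI[of _ "[s 0]"] exI[of _ "\<lambda>_. []"] exI[of _ "path_drop s 1"])
         (simp add: partial_block_def block_word_def)
  next
    case (Suc r0)
    then obtain p \<sigma> s' where pb: "partial_block m d r p \<sigma>" and s': "s' \<in> fair_paths m"
      and alive': "alive (Fstr E M1 (block_word p \<sigma> r) Y) s'"
      using Suc.IH Suc.prems by auto
    obtain k where k: "k \<in> {1..m}" "k \<notin> set p" using partial_block_missing[OF pb] Suc.prems by auto
    have "word (block_word p \<sigma> r)" using partial_block_set[OF pb] by (simp add: word_def)
    then obtain \<tau> s'' where \<tau>: "word \<tau>" "length \<tau> < d" and s'': "s'' \<in> fair_paths m"
      and alive'': "alive (Fstr E M1 (\<tau> @ [k]) (Fstr E M1 (block_word p \<sigma> r) Y)) s''"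
      using gap_to_process[OF d1 Fstr_positive[OF _ Y] s' alive' k(1)] by blast
    have "partial_block m d (Suc r) (p @ [k]) (\<sigma>(r0 := \<tau>))"
      using partial_block_snoc[of m d r0 p \<sigma> k \<tau>] pb k \<tau> Suc by (simp add: word_def)
    moreover have "block_word (p @ [k]) (\<sigma>(r0 := \<tau>)) (Suc r) = block_word p \<sigma> r @ \<tau> @ [k]"
      using block_word_snoc[of p r0] pb Suc by (simp add: partial_block_def)
    ultimately show ?thesis using s'' alive'' by (metis Fstr_append append_assoc)
  qed
qed simp

lemma block_alive:
  assumes "d \<ge> 1" "m \<ge> 1" "positive_op d Y" "s \<in> fair_paths m" "alive Y s"
  shows "\<exists>w s'. w \<in> Pi_set m d \<and> s' \<in> fair_paths m \<and> alive (Fstr E M1 w Y) s'"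
proof -
  obtain p \<sigma> s' where pb: "partial_block m d m p \<sigma>" and s': "s' \<in> fair_paths m"
    and alive: "alive (Fstr E M1 (block_word p \<sigma> m) Y) s'"
    using partial_block_alive[OF assms(1,3-5) assms(2) order_refl] by blast
  show ?thesis
    using partial_block_Pi_set[OF pb] s' alive by (intro exI[of _ "block_word p \<sigma> m"] exI[of _ s'] conjI)
qed

lemma alive_block_sequence:
  assumes d1: "d \<ge> 1" and m1: "m \<ge> 1" and \<rho>: "positive_op d \<rho>" and s: "s \<in> fair_paths m"
    and alive: "alive \<rho> s"
  shows "\<exists>ws. (\<forall>i. ws i \<in> Pi_set m d) \<and> (\<forall>i. Fstr E M1 (concat (map ws [0..<i])) \<rho> \<noteq> 0\<^sub>m d d)"
proof -
  define Inv where "Inv st \<longleftrightarrow> positive_op d (fst st) \<and> snd st \<in> fair_paths m \<and> alive (fst st) (snd st)"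
    for st :: "complex mat \<times> (nat \<Rightarrow> nat)"
  have step: "\<exists>ws. Inv st \<longrightarrow> fst ws \<in> Pi_set m d \<and> Inv (Fstr E M1 (fst ws) (fst st), snd ws)" for st
  proof (cases "Inv st")
    case True
    then have "positive_op d (fst st)" "snd st \<in> fair_paths m" "alive (fst st) (snd st)"
      by (simp_all add: Inv_def)
    then obtain w s' where w: "w \<in> Pi_set m d" "s' \<in> fair_paths m" "alive (Fstr E M1 w (fst st)) s'"
      using block_alive[OF d1 m1] by blast
    have "positive_op d (Fstr E M1 w (fst st))"
      using Fstr_positive[OF _ \<open>positive_op d (fst st)\<close>] Pi_set_props(1)[OF w(1) m1] by (simp add: word_def)
    then show ?thesis using w by (intro exI[of _ "(w, s')"]) (simp add: Inv_def)
  qed simp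
  then have "\<forall>st. \<exists>ws. Inv st \<longrightarrow> fst ws \<in> Pi_set m d \<and> Inv (Fstr E M1 (fst ws) (fst st), snd ws)" ..
  from choice[OF this] obtain nxt
    where nxt: "\<And>st. Inv st \<Longrightarrow> fst (nxt st) \<in> Pi_set m d \<and> Inv (Fstr E M1 (fst (nxt st)) (fst st), snd (nxt st))"
    by blast
  define st where "st = rec_nat (\<rho>, s) (\<lambda>_ st. (Fstr E M1 (fst (nxt st)) (fst st), snd (nxt st)))"
  have st_Suc: "st (Suc i) = (Fstr E M1 (fst (nxt (st i))) (fst (st i)), snd (nxt (st i)))" for i
    by (simp add: st_def)
  have Inv: "Inv (st i)" for i
  proof (induction i)
    case 0 then show ?case using \<rho> s alive by (simp add: st_def Inv_def)
  next
    case (Suc i) then show ?case using nxt[of "st i"] by (simp add: st_Suc)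
  qed
  define ws where "ws i = fst (nxt (st i))" for i
  have st_fst: "fst (st i) = Fstr E M1 (concat (map ws [0..<i])) \<rho>" for i
    by (induction i) (simp_all add: st_def ws_def Fstr_append)
  have "ws i \<in> Pi_set m d" for i using nxt[OF Inv[of i]] by (simp add: ws_def)
  moreover have "Fstr E M1 (concat (map ws [0..<i])) \<rho> \<noteq> 0\<^sub>m d d" for i
    using Inv[of i] alive_nonzero st_fst[of i] unfolding Inv_def by metis
  ultimately show ?thesis by blast
qed

lemma fair_to_Pi_omega:
  assumes d1: "d \<ge> 1" and m1: "m \<ge> 1" and \<rho>: "positive_op d \<rho>" and s: "s \<in> fair_paths m"
    and alive: "alive \<rho> s"
  shows "\<exists>t\<in>Pi_omega m d. alive \<rho> t"
proof -
  obtain ws where ws: "\<And>i. ws i \<in> Pi_set m d"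
    and nz: "\<And>i. Fstr E M1 (concat (map ws [0..<i])) \<rho> \<noteq> 0\<^sub>m d d"
    using alive_block_sequence[OF assms] by blast
  define C where "C i = concat (map ws [0..<i])" for i
  obtain t where t_prefix: "\<And>n. prefix t n = take n (C n)"
    and t_blocks: "\<And>i j. j < length (ws i) \<Longrightarrow> t (length (C i) + j) = ws i ! j"
    using concat_path[of ws] Pi_set_props(3)[OF ws m1] unfolding C_def by blast
  have "t \<in> Pi_omega m d"
    unfolding Pi_omega_def using ws t_blocks by (intro CollectI exI[of _ ws] exI[of _ "\<lambda>i. length (C i)"])
      (simp add: C_def)
  moreover have "alive \<rho> t"
    unfolding alive_def
  proof
    fix n
    have "set (C n) \<subseteq> {1..m}"
    proof
      fix x assume "x \<in> set (C n)"
      then obtain i where "x \<in> set (ws i)" by (auto simp: C_def)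
      then show "x \<in> {1..m}" by (rule subsetD[OF Pi_set_props(1)[OF ws m1]])
    qed
    then have "word (drop n (C n))" unfolding word_def using set_drop_subset by (rule order_trans[rotated])
    then show "Fstr E M1 (prefix t n) \<rho> \<noteq> 0\<^sub>m d d"
      using Fstr_prefix_nonzero[of "drop n (C n)" "take n (C n)" \<rho>] nz[of n] t_prefix
      by (simp add: C_def)
  qed
  ultimately show ?thesis by blast
qed

end


theorem mainTheorem5:
  fixes d m :: nat
    and E :: "nat \<Rightarrow> complex mat \<Rightarrow> complex mat"
    and M0 M1 \<rho>0 :: "complex mat"
  assumes "d \<ge> 1" and "m \<ge> 1"
    and "\<forall>k \<in> {1..m}. super_operator d (E k) \<and> trace_preserving d (E k)"
    and "M0 \<in> carrier_mat d d" and "M1 \<in> carrier_mat d d"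
    and "adj M0 * M0 + adj M1 * M1 = 1\<^sub>m d"
    and "density_op d \<rho>0"
  shows "terminates_in d E M1 \<rho>0 (fair_paths m) \<longleftrightarrow> terminates_in d E M1 \<rho>0 (Pi_omega m d)"
proof -
  interpret qprogram d m E M1 using assms(3,5) by unfold_locales auto
  have \<rho>: "positive_op d \<rho>0" and "trace \<rho>0 = 1" using assms(7) by (auto simp: density_op_def)
  then have "\<rho>0 \<noteq> 0\<^sub>m d d" by (auto simp: trace_def)
  then have term_iff: "terminates_in d E M1 \<rho>0 A \<longleftrightarrow> (\<forall>s\<in>A. \<not> alive \<rho>0 s)" for A
    unfolding terminates_in_def using terminates_for_iff_not_alive by blast
  show ?thesis
    unfolding term_iff using Pi_omega_fair[OF assms(2)] fair_to_Pi_omega[OF assms(1,2) \<rho>] by blast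
qed

end
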